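(* For $i=1,\ldots,n$, $$T(t_i^{-1};\mathbf t)=\Phi_{\mathrm{bdy}}(t_i^{-1})\,C_{\tau_i}(\mathbf t)\big|_{q=1},\qquad T(t_i;\mathbf t)=\Phi_{\mathrm{bdy}}(t_i)\,C_{\tau_i}(\mathbf t)^{-1}\big|_{q=1}.$$
   Context: Parameters $\kappa_0,\kappa,\kappa_n,\upsilon_0,\upsilon_n,\psi_0,\psi_n\in\mathbb{C}^*$ generic, $\mathbf t\in(\mathbb{C}^* )^n$, $q\in\mathbb{C}^*$ with a square root $q^{1/2}$ (specialized to $q^{1/2}=1$ at $q=1$). Matrices w.r.t. ordered bases $(v_+,v_-)$, $(v_{+}\otimes v_+,v_+\otimes v_-,v_-\otimes v_+,v_-\otimes v_-)$; $P$ the flip; subscripts = tensor legs, $r_{ji}:=P_{ij}r_{ij}P_{ij}$. $r(x)=\frac{1}{1-\kappa^2x}\begin{pmatrix}1-\kappa^2x&0&0&0\\0&\kappa(1-x)&1-\kappa^2&0\\0&(1-\kappa^2)x&\kappa(1-x)&0\\0&0&0&1-\kappa^2x\end{pmatrix}$, $\check r(x)=r(x)\circ P$; $\bar k(x)=\frac{\kappa_0}{(1-\kappa_0\upsilon_0x)(1+\kappa_0\upsilon_0^{-1}x)}\begin{pmatrix}(\kappa_0^{-1}-\kappa_0)x^2+(\upsilon_0^{-1}-\upsilon_0)x&\psi_0(1-x^2)\\ \psi_0^{-1}(1-x^2)&\kappa_0^{-1}-\kappa_0+(\upsilon_0^{-1}-\upsilon_0)x\end{pmatrix}$; $k(x)=\frac{\kappa_n}{(1-\kappa_n\upsilon_nx)(1+\kappa_n\upsilon_n^{-1}x)}\begin{pmatrix}\kappa_n^{-1}-\kappa_n+(\upsilon_n^{-1}-\upsilon_n)x&\psi_n^{-1}(1-x^2)\\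 \psi_n(1-x^2)&(\kappa_n^{-1}-\kappa_n)x^2+(\upsilon_n^{-1}-\upsilon_n)x\end{pmatrix}$. Transfer matrix: $\theta=\mathrm{diag}(\kappa^{-1/2},\kappa^{1/2})$, $U_0(x;\mathbf t)=r_{01}(xt_1^{-1})\cdots r_{0n}(xt_n^{-1})k_0(x)r_{n0}(xt_n)\cdots r_{10}(xt_1)$ on $\mathbb{C}^2_{(0)}\otimes(\mathbb{C}^2)^{\otimes n}$, $T(x;\mathbf t)=\mathrm{Tr}_0(\theta_0\bar k_0(\kappa^2x)\theta_0U_0(x;\mathbf t))$. Transport operator: $C_{\tau_i}(\mathbf t)=\check r_{i-1,i}(t_{i-1}/t_i)\check r_{i-2,i-1}(t_{i-2}/t_i)\cdots\check r_{12}(t_1/t_i)\,\bar k_1(q^{1/2}/t_i)\,\check r_{12}(q/t_1t_i)\cdots\check r_{i-1,i}(q/t_{i-1}t_i)\,\check r_{i,i+1}(q/t_it_{i+1})\cdots\check r_{n-1,n}(q/t_it_n)\,k_n(q/t_i)\,\check r_{n-1,n}(qt_n/t_i)\cdots\check r_{i,i+1}(qt_{i+1}/t_i)$. $\Phi_{\mathrm{bdy}}(x)=\kappa\frac{(1-\kappa_0\upsilon_0x)(1+\kappa_0\upsilon_0^{-1}x)(1-\kappa^4x^2)}{(1-\kappa^2\kappa_0\upsilon_0x)(1+\kappa^2\kappa_0\upsilon_0^{-1}x)(1-\kappa^2x^2)}$. *)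

theory Defs
  imports Complex_Main
begin

text \<open>Basis vectors of C^2: True = v_+, False = v_-.  A basis vector of the
tensor product of copies of C^2 indexed by a finite set L of legs is a
function s :: nat => bool that is False outside L.  Operators are given by
their matrix entries A s u (row s, column u), and are zero outside states L.\<close>

type_synonym state = "nat \<Rightarrow> bool"
type_synonym op = "state \<Rightarrow> state \<Rightarrow> complex"

definition states :: "nat set \<Rightarrow> state set" where
  "states L = {s. \<forall>i. i \<notin> L \<longrightarrow> \<not> s i}"

definition mult :: "nat set \<Rightarrow> op \<Rightarrow> op \<Rightarrow> op" where
  "mult L A B = (\<lambda>s u. if s \<in> states L \<and> u \<in> states L
      then (\<Sum>v\<in>states L. A s v * B v u) else 0)"

definition idop :: "nat set \<Rightarrow> op" where
  "idop L = (\<lambda>s u. if s \<in> states L \<and> s = u then 1 else 0)"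

definition smult_op :: "complex \<Rightarrow> op \<Rightarrow> op" where
  "smult_op c A = (\<lambda>s u. c * A s u)"

definition prodops :: "nat set \<Rightarrow> op list \<Rightarrow> op" where
  "prodops L As = foldr (mult L) As (idop L)"

definition ops :: "nat set \<Rightarrow> op set" where
  "ops L = {A. \<forall>s u. A s u \<noteq> 0 \<longrightarrow> s \<in> states L \<and> u \<in> states L}"

definition op_invertible :: "nat set \<Rightarrow> op \<Rightarrow> bool" where
  "op_invertible L A = (\<exists>B\<in>ops L. mult L A B = idop L \<and> mult L B A = idop L)"

definition opinv :: "nat set \<Rightarrow> op \<Rightarrow> op" where
  "opinv L A = (THE B. B \<in> ops L \<and> mult L A B = idop L \<and> mult L B A = idop L)"

definition emb1 :: "nat \<Rightarrow> (bool \<Rightarrow> bool \<Rightarrow> complex) \<Rightarrow> op" where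
  "emb1 i M = (\<lambda>s u. if (\<forall>k. k \<noteq> i \<longrightarrow> s k = u k) then M (s i) (u i) else 0)"

text \<open>A 4x4 matrix M a b c d (row (a,b), column (c,d)) acting on legs i,j, the
first tensor factor being leg i.  Thus r_{ij} = emb2 i j r and
r_{ji} = P_{ij} r_{ij} P_{ij} = emb2 j i r.\<close>
definition emb2 :: "nat \<Rightarrow> nat \<Rightarrow> (bool \<Rightarrow> bool \<Rightarrow> bool \<Rightarrow> bool \<Rightarrow> complex) \<Rightarrow> op" where
  "emb2 i j M = (\<lambda>s u. if (\<forall>k. k \<noteq> i \<and> k \<noteq> j \<longrightarrow> s k = u k)
      then M (s i) (s j) (u i) (u j) else 0)"

definition ptrace0 :: "nat \<Rightarrow> op \<Rightarrow> op" where
  "ptrace0 n A = (\<lambda>s u. if s \<in> states {1..n} \<and> u \<in> states {1..n}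
      then (\<Sum>b\<in>(UNIV::bool set). A (s(0 := b)) (u(0 := b))) else 0)"

definition rmat :: "complex \<Rightarrow> complex \<Rightarrow> bool \<Rightarrow> bool \<Rightarrow> bool \<Rightarrow> bool \<Rightarrow> complex" where
  "rmat \<kappa> x a b c d = (1 / (1 - \<kappa>^2 * x)) *
     (if a \<and> b \<and> c \<and> d then 1 - \<kappa>^2 * x
      else if a \<and> \<not> b \<and> c \<and> \<not> d then \<kappa> * (1 - x)
      else if a \<and> \<not> b \<and> \<not> c \<and> d then 1 - \<kappa>^2
      else if \<not> a \<and> b \<and> c \<and> \<not> d then (1 - \<kappa>^2) * x
      else if \<not> a \<and> b \<and> \<not> c \<and> d then \<kappa> * (1 - x)
      else if \<not> a \<and> \<not> b \<and> \<not> c \<and> \<not> d then 1 - \<kappa>^2 * x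
      else 0)"

text \<open>check r(x) = r(x) o P\<close>
definition rcheck :: "complex \<Rightarrow> complex \<Rightarrow> bool \<Rightarrow> bool \<Rightarrow> bool \<Rightarrow> bool \<Rightarrow> complex" where
  "rcheck \<kappa> x a b c d = rmat \<kappa> x a b d c"

definition kbar :: "complex \<Rightarrow> complex \<Rightarrow> complex \<Rightarrow> complex \<Rightarrow> bool \<Rightarrow> bool \<Rightarrow> complex" where
  "kbar \<kappa>0 \<upsilon>0 \<psi>0 x a c =
     (\<kappa>0 / ((1 - \<kappa>0 * \<upsilon>0 * x) * (1 + \<kappa>0 * x / \<upsilon>0))) *
     (if a \<and> c then (1/\<kappa>0 - \<kappa>0) * x^2 + (1/\<upsilon>0 - \<upsilon>0) * x
      else if a \<and> \<not> c then \<psi>0 * (1 - x^2)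
      else if \<not> a \<and> c then (1 - x^2) / \<psi>0
      else 1/\<kappa>0 - \<kappa>0 + (1/\<upsilon>0 - \<upsilon>0) * x)"

definition kmat :: "complex \<Rightarrow> complex \<Rightarrow> complex \<Rightarrow> complex \<Rightarrow> bool \<Rightarrow> bool \<Rightarrow> complex" where
  "kmat \<kappa>n \<upsilon>n \<psi>n x a c =
     (\<kappa>n / ((1 - \<kappa>n * \<upsilon>n * x) * (1 + \<kappa>n * x / \<upsilon>n))) *
     (if a \<and> c then 1/\<kappa>n - \<kappa>n + (1/\<upsilon>n - \<upsilon>n) * x
      else if a \<and> \<not> c then (1 - x^2) / \<psi>n
      else if \<not> a \<and> c then \<psi>n * (1 - x^2)
      else (1/\<kappa>n - \<kappa>n) * x^2 + (1/\<upsilon>n - \<upsilon>n) * x)"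

text \<open>theta = diag(kappa^(-1/2), kappa^(1/2)) (any square root; only kappa^(+-1)
survive in theta kbar theta).\<close>
definition theta :: "complex \<Rightarrow> bool \<Rightarrow> bool \<Rightarrow> complex" where
  "theta \<kappa> a c = (if a = c then (if a then 1 / csqrt \<kappa> else csqrt \<kappa>) else 0)"

text \<open>t :: nat => complex, with t j the j-th inhomogeneity (j = 1..n).\<close>

definition Ulist :: "nat \<Rightarrow> complex \<Rightarrow> complex \<Rightarrow> complex \<Rightarrow> complex \<Rightarrow>
    (nat \<Rightarrow> complex) \<Rightarrow> complex \<Rightarrow> op list" where
  "Ulist n \<kappa> \<kappa>n \<upsilon>n \<psi>n t x =
     map (\<lambda>j. emb2 0 j (rmat \<kappa> (x / t j))) [1..<n+1]
     @ [emb1 0 (kmat \<kappa>n \<upsilon>n \<psi>n x)]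
     @ map (\<lambda>j. emb2 j 0 (rmat \<kappa> (x * t j))) (rev [1..<n+1])"

definition transfer :: "nat \<Rightarrow> complex \<Rightarrow> complex \<Rightarrow> complex \<Rightarrow> complex \<Rightarrow>
    complex \<Rightarrow> complex \<Rightarrow> complex \<Rightarrow> (nat \<Rightarrow> complex) \<Rightarrow> complex \<Rightarrow> op" where
  "transfer n \<kappa> \<kappa>0 \<upsilon>0 \<psi>0 \<kappa>n \<upsilon>n \<psi>n t x =
     ptrace0 n (prodops {0..n}
       ([emb1 0 (theta \<kappa>), emb1 0 (kbar \<kappa>0 \<upsilon>0 \<psi>0 (\<kappa>^2 * x)), emb1 0 (theta \<kappa>)]
        @ Ulist n \<kappa> \<kappa>n \<upsilon>n \<psi>n t x))"

text \<open>Transport operator C_{tau_i}(t), with q and a chosen square root qh of q.\<close>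
definition transport :: "nat \<Rightarrow> complex \<Rightarrow> complex \<Rightarrow> complex \<Rightarrow> complex \<Rightarrow>
    complex \<Rightarrow> complex \<Rightarrow> complex \<Rightarrow> complex \<Rightarrow> complex \<Rightarrow> (nat \<Rightarrow> complex) \<Rightarrow> nat \<Rightarrow> op" where
  "transport n \<kappa> \<kappa>0 \<upsilon>0 \<psi>0 \<kappa>n \<upsilon>n \<psi>n q qh t i =
     prodops {1..n}
      (map (\<lambda>j. emb2 j (j+1) (rcheck \<kappa> (t j / t i))) (rev [1..<i])
       @ [emb1 1 (kbar \<kappa>0 \<upsilon>0 \<psi>0 (qh / t i))]
       @ map (\<lambda>j. emb2 j (j+1) (rcheck \<kappa> (q / (t j * t i)))) [1..<i]
       @ map (\<lambda>j. emb2 (j-1) j (rcheck \<kappa> (q / (t i * t j)))) [i+1..<n+1]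
       @ [emb1 n (kmat \<kappa>n \<upsilon>n \<psi>n (q / t i))]
       @ map (\<lambda>j. emb2 (j-1) j (rcheck \<kappa> (q * t j / t i))) (rev [i+1..<n+1]))"

definition Phi_bdy :: "complex \<Rightarrow> complex \<Rightarrow> complex \<Rightarrow> complex \<Rightarrow> complex" where
  "Phi_bdy \<kappa> \<kappa>0 \<upsilon>0 x = \<kappa> *
     ((1 - \<kappa>0 * \<upsilon>0 * x) * (1 + \<kappa>0 * x / \<upsilon>0) * (1 - \<kappa>^4 * x^2)) /
     ((1 - \<kappa>^2 * \<kappa>0 * \<upsilon>0 * x) * (1 + \<kappa>^2 * \<kappa>0 * x / \<upsilon>0) * (1 - \<kappa>^2 * x^2))"

text \<open>Rendering of "generic parameters": every denominator occurring in
T(t_i^{+-1}; t), in C_{tau_i}(t) at q = 1, and in Phi_bdy(t_i^{+-1}) is nonzero.\<close>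
definition nondegenerate :: "nat \<Rightarrow> complex \<Rightarrow> complex \<Rightarrow> complex \<Rightarrow> complex \<Rightarrow>
    complex \<Rightarrow> (nat \<Rightarrow> complex) \<Rightarrow> bool" where
  "nondegenerate n \<kappa> \<kappa>0 \<upsilon>0 \<kappa>n \<upsilon>n t =
    (\<forall>i\<in>{1..n}. \<forall>e\<in>{t i, 1 / t i}.
       (\<forall>j\<in>{1..n}. 1 - \<kappa>^2 * e * t j \<noteq> 0 \<and> 1 - \<kappa>^2 * e / t j \<noteq> 0)
     \<and> (\<forall>y\<in>{\<kappa>^2 * e, 1 / t i}. (1 - \<kappa>0 * \<upsilon>0 * y) * (1 + \<kappa>0 * y / \<upsilon>0) \<noteq> 0)
     \<and> (1 - \<kappa>n * \<upsilon>n * e) * (1 + \<kappa>n * e / \<upsilon>n) \<noteq> 0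
     \<and> (1 - \<kappa>^2 * \<kappa>0 * \<upsilon>0 * e) * (1 + \<kappa>^2 * \<kappa>0 * e / \<upsilon>0) * (1 - \<kappa>^2 * e^2) \<noteq> 0)"

end

theory Submission
  imports Defs "HOL-Combinatorics.Transposition"
begin

text \<open>
  At \<open>x = t\<^sub>i\<^sup>-\<^sup>1\<close> the factor \<open>r\<^sub>i\<^sub>0(x t\<^sub>i)\<close> of the double-row monodromy \<open>U\<^sub>0(x)\<close>, and at
  \<open>x = t\<^sub>i\<close> the factor \<open>r\<^sub>0\<^sub>i(x/t\<^sub>i)\<close>, is \<open>r(1)\<close>, the flip \<open>P\<^sub>0\<^sub>i\<close>. Pushing the flip through
  the neighbouring factors relabels the auxiliary leg 0 as leg \<open>i\<close>, and a train of Yang--Baxter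
  moves carries the rows on the legs \<open>1, \<dots>, i-1\<close> past the remaining \<open>r\<^sub>0\<^sub>i(x\<^sup>2)\<close>. Then only
  \<open>\<theta> k\<^sup>-(\<kappa>\<^sup>2x) \<theta> r\<^sub>0\<^sub>i(x\<^sup>2) P\<^sub>0\<^sub>i\<close> touches leg 0, and its partial trace is
  \<open>\<Phi>\<^sub>b\<^sub>d\<^sub>y(x) k\<^sup>-\<^sub>i(x)\<close> by a direct computation. The transport operator, rewritten from
  rcheck's into \<open>r\<close>'s by the same flip trick, is built from the same rows at the spectral
  parameter \<open>t\<^sub>i\<^sup>-\<^sup>1\<close>: at \<open>x = t\<^sub>i\<^sup>-\<^sup>1\<close> the two expressions agree, and at \<open>x = t\<^sub>i\<close> their
  product collapses to \<open>\<Phi>\<^sub>b\<^sub>d\<^sub>y(t\<^sub>i)\<close> by unitarity \<open>r(x) r(1/x) = 1\<close>, \<open>k(x) k(1/x) = 1\<close>.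
\<close>

lemma finite_states: "finite L \<Longrightarrow> finite (states L)"
proof -
  assume "finite L"
  have "inj_on (\<lambda>s. {k. s k}) (states L)"
    by (auto simp: inj_on_def states_def fun_eq_iff)
  moreover have "(\<lambda>s. {k. s k}) ` states L \<subseteq> Pow L"
    by (auto simp: states_def)
  ultimately show ?thesis
    using \<open>finite L\<close> by (meson finite_Pow_iff finite_subset inj_on_finite)
qed

definition restrict_op :: "nat set \<Rightarrow> op \<Rightarrow> op" where
  "restrict_op L A = (\<lambda>s u. if s \<in> states L \<and> u \<in> states L then A s u else 0)"

lemma mult_restrict_left [simp]: "mult L (restrict_op L A) B = mult L A B"
  by (auto simp: mult_def restrict_op_def fun_eq_iff intro!: sum.cong)

lemma mult_restrict_right [simp]: "mult L A (restrict_op L B) = mult L A B"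
  by (auto simp: mult_def restrict_op_def fun_eq_iff intro!: sum.cong)

lemma restrict_mult [simp]: "restrict_op L (mult L A B) = mult L A B"
  by (auto simp: mult_def restrict_op_def fun_eq_iff)

lemma restrict_idop [simp]: "restrict_op L (idop L) = idop L"
  unfolding idop_def restrict_op_def by (intro ext) auto

lemma restrict_smult: "restrict_op L (smult_op c A) = smult_op c (restrict_op L A)"
  by (auto simp: restrict_op_def smult_op_def fun_eq_iff)

lemma restrict_op_ops: "A \<in> ops L \<Longrightarrow> restrict_op L A = A"
  by (auto simp: ops_def restrict_op_def fun_eq_iff)

lemma mult_assoc:
  assumes "finite L"
  shows "mult L (mult L A B) C = mult L A (mult L B C)"
proof -
  have "(\<Sum>v\<in>states L. (\<Sum>w\<in>states L. A s w * B w v) * C v u) =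
        (\<Sum>w\<in>states L. A s w * (\<Sum>v\<in>states L. B w v * C v u))" for s u
    by (simp add: sum_distrib_left sum_distrib_right mult.assoc, rule sum.swap)
  then show ?thesis
    by (auto simp: mult_def fun_eq_iff intro!: sum.cong)
qed

lemma mult_idop_left [simp]: "finite L \<Longrightarrow> mult L (idop L) A = restrict_op L A"
proof -
  assume fin: "finite L"
  have "(\<Sum>v\<in>states L. (if s \<in> states L \<and> s = v then 1 else 0) * A v u) = A s u"
    if "s \<in> states L" for s u
    using that fin by (simp add: finite_states if_distrib[of "\<lambda>c. c * A _ u"] cong: if_cong)
  then show ?thesis by (auto simp: mult_def idop_def restrict_op_def fun_eq_iff)
qed

lemma mult_idop_right [simp]: "finite L \<Longrightarrow> mult L A (idop L) = restrict_op L A"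
proof -
  assume fin: "finite L"
  have "(\<Sum>v\<in>states L. A s v * (if v \<in> states L \<and> v = u then 1 else 0)) = A s u"
    if "u \<in> states L" for s u
    using that fin by (simp add: if_distrib finite_states cong: if_cong)
  then show ?thesis by (auto simp: mult_def idop_def restrict_op_def fun_eq_iff)
qed

lemma mult_eq_imp_mult_mult_eq:
  "finite L \<Longrightarrow> mult L A B = mult L C D \<Longrightarrow> mult L A (mult L B X) = mult L C (mult L D X)"
  by (metis mult_assoc)

lemma mult_cancel_inner:
  "finite L \<Longrightarrow> mult L A B = idop L \<Longrightarrow> mult L A (mult L B Y) = restrict_op L Y"
  by (metis mult_assoc mult_idop_left)

lemma smult_smult [simp]: "smult_op c (smult_op d A) = smult_op (c * d) A"
  by (simp add: smult_op_def mult.assoc)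

lemma smult_mult_left: "mult L (smult_op c A) B = smult_op c (mult L A B)"
  by (auto simp: mult_def smult_op_def fun_eq_iff sum_distrib_left mult.assoc)

lemma smult_mult_right: "mult L A (smult_op c B) = smult_op c (mult L A B)"
  by (auto simp: mult_def smult_op_def fun_eq_iff sum_distrib_left mult.left_commute)

lemma prodops_Nil [simp]: "prodops L [] = idop L"
  by (simp add: prodops_def)

lemma prodops_Cons [simp]: "prodops L (A # As) = mult L A (prodops L As)"
  by (simp add: prodops_def)

lemma restrict_prodops [simp]: "restrict_op L (prodops L As) = prodops L As"
  by (cases As) simp_all

lemma prodops_append:
  "finite L \<Longrightarrow> prodops L (As @ Bs) = mult L (prodops L As) (prodops L Bs)"
  by (induction As) (simp_all add: mult_assoc)

lemma prodops_snoc: "finite L \<Longrightarrow> prodops L (As @ [B]) = mult L (prodops L As) B"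
  by (simp add: prodops_append)

lemma opinv_eq:
  assumes fin: "finite L" and B: "B \<in> ops L" "mult L C B = idop L" "mult L B C = idop L"
  shows "opinv L C = B"
  unfolding opinv_def
proof (rule the_equality)
  fix B' assume B': "B' \<in> ops L \<and> mult L C B' = idop L \<and> mult L B' C = idop L"
  have "B' = mult L B' (mult L C B)"
    using B(2) B' fin by (simp add: restrict_op_ops)
  also have "\<dots> = B"
    using B' B(1) fin by (simp add: mult_assoc[symmetric] restrict_op_ops)
  finally show "B' = B" .
qed (use B in blast)

lemma eq_smult_opinv_if_mult_eq_smult_idop:
  assumes fin: "finite L" and inv: "op_invertible L C"
    and TC: "mult L T C = smult_op c (idop L)" and T: "restrict_op L T = T"
  shows "T = smult_op c (opinv L C)"
proof -
  obtain B where B: "B \<in> ops L" "mult L C B = idop L" "mult L B C = idop L"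
    using inv unfolding op_invertible_def by blast
  have "T = mult L (mult L T C) B"
    using B(2) fin T by (simp add: mult_assoc)
  then show ?thesis
    using TC B fin by (simp add: smult_mult_left restrict_op_ops opinv_eq)
qed

lemma sum_reindex_support:
  assumes "finite F" "g ` X \<subseteq> F" "inj_on g X" "\<forall>v\<in>F. f v \<noteq> 0 \<longrightarrow> v \<in> g ` X"
  shows "sum f F = (\<Sum>x\<in>X. f (g x))"
proof -
  have "sum f F = sum f (g ` X)"
    using assms by (intro sum.mono_neutral_right) auto
  also have "\<dots> = (\<Sum>x\<in>X. f (g x))"
    using assms(3) by (simp add: sum.reindex)
  finally show ?thesis .
qed

lemma states_fun_upd [simp]: "s \<in> states L \<Longrightarrow> a \<in> L \<Longrightarrow> s(a := p) \<in> states L"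
  by (auto simp: states_def)

lemma sum_states_vary1:
  assumes "finite L" "s \<in> states L" "a \<in> L"
    and "\<forall>v\<in>states L. f v \<noteq> 0 \<longrightarrow> (\<forall>k. k \<noteq> a \<longrightarrow> v k = s k)"
  shows "sum f (states L) = (\<Sum>p\<in>UNIV. f (s(a := p)))"
proof (rule sum_reindex_support)
  show "\<forall>v\<in>states L. f v \<noteq> 0 \<longrightarrow> v \<in> range (\<lambda>p. s(a := p))"
  proof (intro ballI impI)
    fix v assume "v \<in> states L" "f v \<noteq> 0"
    then have "v = s(a := v a)" using assms(4) by (auto simp: fun_eq_iff)
    then show "v \<in> range (\<lambda>p. s(a := p))" by blast
  qed
qed (use assms in \<open>auto simp: finite_states inj_on_def fun_eq_iff\<close>)

lemma sum_states_vary2: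
  assumes "finite L" "s \<in> states L" "a \<in> L" "b \<in> L" "a \<noteq> b"
    and "\<forall>v\<in>states L. f v \<noteq> 0 \<longrightarrow> (\<forall>k. k \<noteq> a \<and> k \<noteq> b \<longrightarrow> v k = s k)"
  shows "sum f (states L) = (\<Sum>p\<in>UNIV. \<Sum>q\<in>UNIV. f (s(a := p, b := q)))"
proof -
  have "sum f (states L) = (\<Sum>x\<in>UNIV. f ((\<lambda>(p, q). s(a := p, b := q)) x))"
  proof (rule sum_reindex_support)
    show "\<forall>v\<in>states L. f v \<noteq> 0 \<longrightarrow> v \<in> range (\<lambda>(p, q). s(a := p, b := q))"
    proof (intro ballI impI)
      fix v assume "v \<in> states L" "f v \<noteq> 0"
      then have "v = (\<lambda>(p, q). s(a := p, b := q)) (v a, v b)"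
        using assms(6) by (auto simp: fun_eq_iff)
      then show "v \<in> range (\<lambda>(p, q). s(a := p, b := q))" by blast
    qed
  qed (use assms in \<open>auto simp: finite_states inj_on_def fun_eq_iff\<close>)
  then show ?thesis
    by (simp add: UNIV_Times_UNIV[symmetric] sum.cartesian_product prod.case_distrib
        del: UNIV_Times_UNIV)
qed

lemma sum_states_vary3:
  assumes "finite L" "s \<in> states L" "a \<in> L" "b \<in> L" "c \<in> L" "a \<noteq> b" "a \<noteq> c" "b \<noteq> c"
    and "\<forall>v\<in>states L. f v \<noteq> 0 \<longrightarrow> (\<forall>k. k \<noteq> a \<and> k \<noteq> b \<and> k \<noteq> c \<longrightarrow> v k = s k)"
  shows "sum f (states L) = (\<Sum>p\<in>UNIV. \<Sum>q\<in>UNIV. \<Sum>r\<in>UNIV. f (s(a := p, b := q, c := r)))"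
proof -
  have "sum f (states L) = (\<Sum>x\<in>UNIV. f ((\<lambda>(p, q, r). s(a := p, b := q, c := r)) x))"
  proof (rule sum_reindex_support)
    show "\<forall>v\<in>states L. f v \<noteq> 0 \<longrightarrow> v \<in> range (\<lambda>(p, q, r). s(a := p, b := q, c := r))"
    proof (intro ballI impI)
      fix v assume "v \<in> states L" "f v \<noteq> 0"
      then have "v = (\<lambda>(p, q, r). s(a := p, b := q, c := r)) (v a, v b, v c)"
        using assms(9) by (auto simp: fun_eq_iff)
      then show "v \<in> range (\<lambda>(p, q, r). s(a := p, b := q, c := r))" by blast
    qed
  qed (use assms in \<open>auto simp: finite_states inj_on_def fun_eq_iff\<close>)
  then show ?thesis
    by (simp add: UNIV_Times_UNIV[symmetric] sum.cartesian_product prod.case_distrib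
        del: UNIV_Times_UNIV)
qed

type_synonym mat3 = "bool \<Rightarrow> bool \<Rightarrow> bool \<Rightarrow> bool \<Rightarrow> bool \<Rightarrow> bool \<Rightarrow> complex"

definition emb3 :: "nat \<Rightarrow> nat \<Rightarrow> nat \<Rightarrow> mat3 \<Rightarrow> op" where
  "emb3 a b c M = (\<lambda>s u. if (\<forall>k. k \<noteq> a \<and> k \<noteq> b \<and> k \<noteq> c \<longrightarrow> s k = u k)
      then M (s a) (s b) (s c) (u a) (u b) (u c) else 0)"

lemma mult_emb1_emb1:
  assumes "finite L" "a \<in> L"
  shows "mult L (emb1 a X) (emb1 a Y) = restrict_op L (emb1 a (\<lambda>p q. \<Sum>r\<in>UNIV. X p r * Y r q))"
proof (intro ext)
  fix s u
  show "mult L (emb1 a X) (emb1 a Y) s u = restrict_op L (emb1 a (\<lambda>p q. \<Sum>r\<in>UNIV. X p r * Y r q)) s u"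
  proof (cases "s \<in> states L \<and> u \<in> states L")
    case True
    then have "(\<Sum>v\<in>states L. emb1 a X s v * emb1 a Y v u) =
        (\<Sum>p\<in>UNIV. emb1 a X s (s(a := p)) * emb1 a Y (s(a := p)) u)"
      using assms by (intro sum_states_vary1) (auto simp: emb1_def split: if_splits)
    also have "\<dots> = emb1 a (\<lambda>p q. \<Sum>r\<in>UNIV. X p r * Y r q) s u"
      by (cases "\<forall>k. k \<noteq> a \<longrightarrow> s k = u k") (simp_all add: emb1_def del: not_all)
    finally show ?thesis using True by (simp add: mult_def restrict_op_def)
  qed (auto simp: mult_def restrict_op_def)
qed

lemma mult_emb1_emb2:
  assumes "finite L" "a \<in> L" "b \<in> L" "a \<noteq> b"
  shows "mult L (emb1 a X) (emb2 a b R) =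
    restrict_op L (emb2 a b (\<lambda>p1 p2 q1 q2. \<Sum>r\<in>UNIV. X p1 r * R r p2 q1 q2))"
proof (intro ext)
  fix s u
  show "mult L (emb1 a X) (emb2 a b R) s u =
    restrict_op L (emb2 a b (\<lambda>p1 p2 q1 q2. \<Sum>r\<in>UNIV. X p1 r * R r p2 q1 q2)) s u"
  proof (cases "s \<in> states L \<and> u \<in> states L")
    case True
    then have "(\<Sum>v\<in>states L. emb1 a X s v * emb2 a b R v u) =
        (\<Sum>p\<in>UNIV. emb1 a X s (s(a := p)) * emb2 a b R (s(a := p)) u)"
      using assms by (intro sum_states_vary1) (auto simp: emb1_def split: if_splits)
    also have "\<dots> = emb2 a b (\<lambda>p1 p2 q1 q2. \<Sum>r\<in>UNIV. X p1 r * R r p2 q1 q2) s u"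
      using assms(4) by (cases "\<forall>k. k \<noteq> a \<and> k \<noteq> b \<longrightarrow> s k = u k")
        (simp_all add: emb1_def emb2_def del: not_all)
    finally show ?thesis using True by (simp add: mult_def restrict_op_def)
  qed (auto simp: mult_def restrict_op_def)
qed

lemma mult_emb2_emb2:
  assumes "finite L" "a \<in> L" "b \<in> L" "a \<noteq> b"
  shows "mult L (emb2 a b M) (emb2 a b N) = restrict_op L
    (emb2 a b (\<lambda>p1 p2 q1 q2. \<Sum>r\<in>UNIV. \<Sum>r'\<in>UNIV. M p1 p2 r r' * N r r' q1 q2))"
proof (intro ext)
  fix s u
  show "mult L (emb2 a b M) (emb2 a b N) s u = restrict_op L
    (emb2 a b (\<lambda>p1 p2 q1 q2. \<Sum>r\<in>UNIV. \<Sum>r'\<in>UNIV. M p1 p2 r r' * N r r' q1 q2)) s u"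
  proof (cases "s \<in> states L \<and> u \<in> states L")
    case True
    then have "(\<Sum>v\<in>states L. emb2 a b M s v * emb2 a b N v u) =
        (\<Sum>p\<in>UNIV. \<Sum>q\<in>UNIV. emb2 a b M s (s(a := p, b := q)) * emb2 a b N (s(a := p, b := q)) u)"
      using assms by (intro sum_states_vary2) (auto simp: emb2_def split: if_splits)
    also have "\<dots> = emb2 a b (\<lambda>p1 p2 q1 q2. \<Sum>r\<in>UNIV. \<Sum>r'\<in>UNIV. M p1 p2 r r' * N r r' q1 q2) s u"
      using assms(4) by (cases "\<forall>k. k \<noteq> a \<and> k \<noteq> b \<longrightarrow> s k = u k")
        (simp_all add: emb2_def del: not_all)
    finally show ?thesis using True by (simp add: mult_def restrict_op_def)
  qed (auto simp: mult_def restrict_op_def)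
qed

lemma mult_emb3_emb3:
  assumes "finite L" "a \<in> L" "b \<in> L" "c \<in> L" "a \<noteq> b" "a \<noteq> c" "b \<noteq> c"
  shows "mult L (emb3 a b c M) (emb3 a b c N) = restrict_op L (emb3 a b c (\<lambda>p1 p2 p3 q1 q2 q3.
     \<Sum>r\<in>UNIV. \<Sum>r'\<in>UNIV. \<Sum>r''\<in>UNIV. M p1 p2 p3 r r' r'' * N r r' r'' q1 q2 q3))"
proof (intro ext)
  fix s u
  show "mult L (emb3 a b c M) (emb3 a b c N) s u = restrict_op L (emb3 a b c (\<lambda>p1 p2 p3 q1 q2 q3.
     \<Sum>r\<in>UNIV. \<Sum>r'\<in>UNIV. \<Sum>r''\<in>UNIV. M p1 p2 p3 r r' r'' * N r r' r'' q1 q2 q3)) s u"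
  proof (cases "s \<in> states L \<and> u \<in> states L")
    case True
    then have "(\<Sum>v\<in>states L. emb3 a b c M s v * emb3 a b c N v u) =
        (\<Sum>p\<in>UNIV. \<Sum>q\<in>UNIV. \<Sum>r\<in>UNIV.
          emb3 a b c M s (s(a := p, b := q, c := r)) * emb3 a b c N (s(a := p, b := q, c := r)) u)"
      using assms by (intro sum_states_vary3) (auto simp: emb3_def split: if_splits)
    also have "\<dots> = emb3 a b c (\<lambda>p1 p2 p3 q1 q2 q3.
        \<Sum>r\<in>UNIV. \<Sum>r'\<in>UNIV. \<Sum>r''\<in>UNIV. M p1 p2 p3 r r' r'' * N r r' r'' q1 q2 q3) s u"
      using assms(5-7) by (cases "\<forall>k. k \<noteq> a \<and> k \<noteq> b \<and> k \<noteq> c \<longrightarrow> s k = u k")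
        (simp_all add: emb3_def del: not_all)
    finally show ?thesis using True by (simp add: mult_def restrict_op_def)
  qed (auto simp: mult_def restrict_op_def)
qed

lemma emb2_as_emb3_12:
  assumes "c \<noteq> a" "c \<noteq> b"
  shows "emb2 a b R = emb3 a b c (\<lambda>x y z x' y' z'. R x y x' y' * (if z = z' then 1 else 0))"
proof (intro ext)
  fix s u :: state
  have "(\<forall>k. k \<noteq> a \<and> k \<noteq> b \<longrightarrow> s k = u k) =
      ((\<forall>k. k \<noteq> a \<and> k \<noteq> b \<and> k \<noteq> c \<longrightarrow> s k = u k) \<and> s c = u c)"
    using assms by metis
  then show "emb2 a b R s u = emb3 a b c (\<lambda>x y z x' y' z'. R x y x' y' * (if z = z' then 1 else 0)) s u"
    unfolding emb2_def emb3_def by (cases "s c = u c") (simp_all del: not_all)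
qed

lemma emb2_as_emb3_13:
  assumes "b \<noteq> a" "b \<noteq> c"
  shows "emb2 a c R = emb3 a b c (\<lambda>x y z x' y' z'. R x z x' z' * (if y = y' then 1 else 0))"
proof (intro ext)
  fix s u :: state
  have "(\<forall>k. k \<noteq> a \<and> k \<noteq> c \<longrightarrow> s k = u k) =
      ((\<forall>k. k \<noteq> a \<and> k \<noteq> b \<and> k \<noteq> c \<longrightarrow> s k = u k) \<and> s b = u b)"
    using assms by metis
  then show "emb2 a c R s u = emb3 a b c (\<lambda>x y z x' y' z'. R x z x' z' * (if y = y' then 1 else 0)) s u"
    unfolding emb2_def emb3_def by (cases "s b = u b") (simp_all del: not_all)
qed

lemma emb2_as_emb3_23:
  assumes "a \<noteq> b" "a \<noteq> c"
  shows "emb2 b c R = emb3 a b c (\<lambda>x y z x' y' z'. R y z y' z' * (if x = x' then 1 else 0))"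
proof (intro ext)
  fix s u :: state
  have "(\<forall>k. k \<noteq> b \<and> k \<noteq> c \<longrightarrow> s k = u k) =
      ((\<forall>k. k \<noteq> a \<and> k \<noteq> b \<and> k \<noteq> c \<longrightarrow> s k = u k) \<and> s a = u a)"
    using assms by metis
  then show "emb2 b c R s u = emb3 a b c (\<lambda>x y z x' y' z'. R y z y' z' * (if x = x' then 1 else 0)) s u"
    unfolding emb2_def emb3_def by (cases "s a = u a") (simp_all del: not_all)
qed

lemma emb2_swap_legs: "a \<noteq> b \<Longrightarrow> emb2 b a R = emb2 a b (\<lambda>p q p' q'. R q p q' p')"
  by (auto simp: emb2_def fun_eq_iff)

lemma emb1_smult: "emb1 a (\<lambda>p q. c * K p q) = smult_op c (emb1 a K)"
  by (auto simp: emb1_def smult_op_def fun_eq_iff)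

lemma emb2_smult: "emb2 a b (\<lambda>p q p' q'. c * R p q p' q') = smult_op c (emb2 a b R)"
  by (auto simp: emb2_def smult_op_def fun_eq_iff)

lemma restrict_emb1_id: "restrict_op L (emb1 a (\<lambda>p p'. if p = p' then 1 else 0)) = idop L"
proof -
  have "((\<forall>k. k \<noteq> a \<longrightarrow> s k = u k) \<and> s a = u a) = (s = u)" for s u :: state
    by (auto simp: fun_eq_iff)
  then show ?thesis
    unfolding restrict_op_def idop_def emb1_def by (intro ext) (smt (verit))
qed

lemma restrict_emb2_id:
  assumes "a \<noteq> b"
  shows "restrict_op L (emb2 a b (\<lambda>p q p' q'. if p = p' \<and> q = q' then 1 else 0)) = idop L"
proof -
  have "((\<forall>k. k \<noteq> a \<and> k \<noteq> b \<longrightarrow> s k = u k) \<and> s a = u a \<and> s b = u b) = (s = u)" for s u :: state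
    by (auto simp: fun_eq_iff)
  then show ?thesis
    unfolding restrict_op_def idop_def emb2_def by (intro ext) (smt (verit))
qed

section \<open>Transpositions of legs\<close>

definition flip_op :: "nat set \<Rightarrow> nat \<Rightarrow> nat \<Rightarrow> op" where
  "flip_op L a b = restrict_op L (\<lambda>s u. if u = s \<circ> transpose a b then 1 else 0)"

definition swap_conj :: "nat \<Rightarrow> nat \<Rightarrow> op \<Rightarrow> op" where
  "swap_conj a b A = (\<lambda>s u. A (s \<circ> transpose a b) (u \<circ> transpose a b))"

lemma comp_transpose_involutory [simp]: "s \<circ> transpose a b \<circ> transpose a b = s"
  by (simp add: comp_assoc)

lemma comp_transpose_in_states [simp]:
  "a \<in> L \<Longrightarrow> b \<in> L \<Longrightarrow> (s \<circ> transpose a b \<in> states L) = (s \<in> states L)"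
  by (auto simp: states_def transpose_def)

lemma flip_op_commute: "flip_op L b a = flip_op L a b"
  by (simp add: flip_op_def transpose_commute)

lemma comp_transpose_eq_iff [simp]: "(s \<circ> transpose a b = u \<circ> transpose a b) = (s = u)"
  by (metis comp_transpose_involutory)

lemma mult_flip_left:
  assumes "finite L" "a \<in> L" "b \<in> L"
  shows "mult L (flip_op L a b) A = restrict_op L (\<lambda>s u. A (s \<circ> transpose a b) u)"
proof (intro ext)
  fix s u
  have "s \<in> states L \<Longrightarrow> (\<Sum>v\<in>states L. (if s \<in> states L \<and> v \<in> states L then
      if v = s \<circ> transpose a b then 1 else 0 else 0) * A v u) = A (s \<circ> transpose a b) u"
    using assms by (simp add: finite_states if_distrib[of "\<lambda>c. c * A _ u"] cong: if_cong)
  then show "mult L (flip_op L a b) A s u = restrict_op L (\<lambda>s u. A (s \<circ> transpose a b) u) s u"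
    by (simp add: mult_def restrict_op_def flip_op_def)
qed

lemma mult_flip_right:
  assumes "finite L" "a \<in> L" "b \<in> L"
  shows "mult L A (flip_op L a b) = restrict_op L (\<lambda>s u. A s (u \<circ> transpose a b))"
proof (intro ext)
  fix s u
  have e: "(u = v \<circ> transpose a b) = (v = u \<circ> transpose a b)" for v :: state
    by auto
  have "u \<in> states L \<Longrightarrow> (\<Sum>v\<in>states L. A s v * (if v \<in> states L \<and> u \<in> states L then
      if u = v \<circ> transpose a b then 1 else 0 else 0)) = A s (u \<circ> transpose a b)"
    using assms by (simp add: e finite_states if_distrib[of "\<lambda>c. A s _ * c"] cong: if_cong)
  then show "mult L A (flip_op L a b) s u = restrict_op L (\<lambda>s u. A s (u \<circ> transpose a b)) s u"
    by (simp add: mult_def restrict_op_def flip_op_def)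
qed

lemma flip_mult_eq_mult_flip:
  assumes "finite L" "a \<in> L" "b \<in> L"
  shows "mult L (flip_op L a b) A = mult L (swap_conj a b A) (flip_op L a b)"
  using assms by (simp add: mult_flip_left mult_flip_right swap_conj_def)

lemma mult_flip_eq_flip_mult:
  assumes "finite L" "a \<in> L" "b \<in> L"
  shows "mult L A (flip_op L a b) = mult L (flip_op L a b) (swap_conj a b A)"
  using assms by (simp add: mult_flip_left mult_flip_right swap_conj_def)

lemma flip_sandwich:
  assumes "finite L" "a \<in> L" "b \<in> L"
  shows "mult L (flip_op L a b) (mult L A (flip_op L a b)) = restrict_op L (swap_conj a b A)"
  using assms by (simp add: mult_flip_left mult_flip_right swap_conj_def restrict_op_def fun_eq_iff)

lemma swap_conj_mult:
  assumes "finite L" "a \<in> L" "b \<in> L"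
  shows "swap_conj a b (mult L A B) = mult L (swap_conj a b A) (swap_conj a b B)"
proof (intro ext)
  fix s u
  have "(\<Sum>v\<in>states L. A (s \<circ> transpose a b) v * B v (u \<circ> transpose a b)) =
    (\<Sum>v\<in>states L. A (s \<circ> transpose a b) (v \<circ> transpose a b) * B (v \<circ> transpose a b) (u \<circ> transpose a b))"
    by (rule sum.reindex_bij_witness[of _ "\<lambda>v. v \<circ> transpose a b" "\<lambda>v. v \<circ> transpose a b"])
      (use assms in auto)
  then show "swap_conj a b (mult L A B) s u = mult L (swap_conj a b A) (swap_conj a b B) s u"
    using assms by (simp add: swap_conj_def mult_def)
qed

lemma swap_conj_idop: "a \<in> L \<Longrightarrow> b \<in> L \<Longrightarrow> swap_conj a b (idop L) = idop L"
  unfolding swap_conj_def idop_def by (intro ext) simp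

lemma swap_conj_restrict:
  "a \<in> L \<Longrightarrow> b \<in> L \<Longrightarrow> swap_conj a b (restrict_op L A) = restrict_op L (swap_conj a b A)"
  by (auto simp: swap_conj_def restrict_op_def fun_eq_iff)

lemma swap_conj_prodops:
  assumes "finite L" "a \<in> L" "b \<in> L"
  shows "swap_conj a b (prodops L As) = prodops L (map (swap_conj a b) As)"
  by (induction As) (simp_all add: swap_conj_mult swap_conj_idop assms)

lemma swap_conj_emb1: "swap_conj a b (emb1 c M) = emb1 (transpose a b c) M"
proof -
  have "(\<forall>k. k \<noteq> c \<longrightarrow> s (transpose a b k) = u (transpose a b k)) =
      (\<forall>k. k \<noteq> transpose a b c \<longrightarrow> s k = u k)" for s u :: state
    by (metis transpose_involutory)
  then show ?thesis
    unfolding swap_conj_def emb1_def comp_apply by (intro ext) (simp only:)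
qed

lemma swap_conj_emb2: "swap_conj a b (emb2 c d M) = emb2 (transpose a b c) (transpose a b d) M"
proof -
  have "(\<forall>k. k \<noteq> c \<and> k \<noteq> d \<longrightarrow> s (transpose a b k) = u (transpose a b k)) =
      (\<forall>k. k \<noteq> transpose a b c \<and> k \<noteq> transpose a b d \<longrightarrow> s k = u k)" for s u :: state
    by (metis transpose_involutory)
  then show ?thesis
    unfolding swap_conj_def emb2_def comp_apply by (intro ext) (simp only:)
qed

lemma restrict_emb2_rcheck:
  assumes "finite L" "a \<in> L" "b \<in> L" "a \<noteq> b"
  shows "restrict_op L (emb2 a b (rcheck \<kappa> y)) = mult L (emb2 a b (rmat \<kappa> y)) (flip_op L a b)"
  using assms by (auto simp: mult_flip_right emb2_def rcheck_def restrict_op_def fun_eq_iff)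

lemma restrict_emb2_rmat_1:
  assumes "\<kappa>^2 \<noteq> 1" "a \<in> L" "b \<in> L" "a \<noteq> b"
  shows "restrict_op L (emb2 a b (rmat \<kappa> 1)) = flip_op L a b"
proof -
  have r: "rmat \<kappa> 1 p q p' q' = (if p = q' \<and> q = p' then 1 else 0)" for p q p' q'
    using assms(1) by (simp add: rmat_def)
  have e: "((\<forall>k. k \<noteq> a \<and> k \<noteq> b \<longrightarrow> s k = u k) \<and> s a = u b \<and> s b = u a) = (u = s \<circ> transpose a b)"
    for s u :: state
    using assms(4) unfolding fun_eq_iff comp_def transpose_def by (smt (verit))
  show ?thesis
    unfolding restrict_op_def flip_op_def emb2_def r e[symmetric]
    by (intro ext) (simp only: if_if_eq_conj)
qed

definition acts_on :: "nat set \<Rightarrow> nat set \<Rightarrow> op \<Rightarrow> bool" where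
  "acts_on L S A \<longleftrightarrow> (\<forall>s u. A s u \<noteq> 0 \<longrightarrow> (\<forall>k. k \<notin> S \<longrightarrow> s k = u k)) \<and>
     (\<forall>s u s' u'. s \<in> states L \<longrightarrow> u \<in> states L \<longrightarrow> s' \<in> states L \<longrightarrow> u' \<in> states L \<longrightarrow>
        (\<forall>k. k \<notin> S \<longrightarrow> s k = u k) \<longrightarrow> (\<forall>k. k \<notin> S \<longrightarrow> s' k = u' k) \<longrightarrow>
        (\<forall>k\<in>S. s k = s' k \<and> u k = u' k) \<longrightarrow> A s u = A s' u')"

lemma acts_onI:
  assumes "\<And>s u k. A s u \<noteq> 0 \<Longrightarrow> k \<notin> S \<Longrightarrow> s k = u k"
    and "\<And>s u s' u'. s \<in> states L \<Longrightarrow> u \<in> states L \<Longrightarrow> s' \<in> states L \<Longrightarrow> u' \<in> states L \<Longrightarrow>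
        \<forall>k. k \<notin> S \<longrightarrow> s k = u k \<Longrightarrow> \<forall>k. k \<notin> S \<longrightarrow> s' k = u' k \<Longrightarrow>
        \<forall>k\<in>S. s k = s' k \<and> u k = u' k \<Longrightarrow> A s u = A s' u'"
  shows "acts_on L S A"
  unfolding acts_on_def using assms by blast

lemma acts_on_supp: "acts_on L S A \<Longrightarrow> A s u \<noteq> 0 \<Longrightarrow> k \<notin> S \<Longrightarrow> s k = u k"
  by (auto simp: acts_on_def)

lemma acts_on_dep:
  assumes "acts_on L S A" "s \<in> states L" "u \<in> states L" "s' \<in> states L" "u' \<in> states L"
    "\<forall>k. k \<notin> S \<longrightarrow> s k = u k" "\<forall>k. k \<notin> S \<longrightarrow> s' k = u' k" "\<forall>k\<in>S. s k = s' k \<and> u k = u' k"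
  shows "A s u = A s' u'"
proof -
  have dep: "\<forall>s u s' u'. s \<in> states L \<longrightarrow> u \<in> states L \<longrightarrow> s' \<in> states L \<longrightarrow> u' \<in> states L \<longrightarrow>
      (\<forall>k. k \<notin> S \<longrightarrow> s k = u k) \<longrightarrow> (\<forall>k. k \<notin> S \<longrightarrow> s' k = u' k) \<longrightarrow>
      (\<forall>k\<in>S. s k = s' k \<and> u k = u' k) \<longrightarrow> A s u = A s' u'"
    using assms(1) unfolding acts_on_def by (rule conjunct2)
  show ?thesis
    using assms(6-8) by (intro dep[rule_format, OF assms(2-5)]) auto
qed

lemma acts_on_mono: "acts_on L S A \<Longrightarrow> S \<subseteq> S' \<Longrightarrow> acts_on L S' A"
  unfolding acts_on_def by (intro conjI allI impI) (blast, smt (verit) subsetD)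

lemma acts_on_emb1: "a \<in> S \<Longrightarrow> acts_on L S (emb1 a M)"
proof (rule acts_onI)
  fix s u s' u' :: state
  assume a: "a \<in> S" and h: "\<forall>k. k \<notin> S \<longrightarrow> s k = u k" "\<forall>k. k \<notin> S \<longrightarrow> s' k = u' k"
    "\<forall>k\<in>S. s k = s' k \<and> u k = u' k"
  have "(\<forall>k. k \<noteq> a \<longrightarrow> s k = u k) = (\<forall>k. k \<noteq> a \<longrightarrow> s' k = u' k)" "s a = s' a" "u a = u' a"
    using h a by metis+
  then show "emb1 a M s u = emb1 a M s' u'"
    unfolding emb1_def by (simp only:)
qed (auto simp: emb1_def split: if_splits)

lemma acts_on_emb2: "a \<in> S \<Longrightarrow> b \<in> S \<Longrightarrow> acts_on L S (emb2 a b M)"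
proof (rule acts_onI)
  fix s u s' u' :: state
  assume a: "a \<in> S" "b \<in> S" and h: "\<forall>k. k \<notin> S \<longrightarrow> s k = u k" "\<forall>k. k \<notin> S \<longrightarrow> s' k = u' k"
    "\<forall>k\<in>S. s k = s' k \<and> u k = u' k"
  have "(\<forall>k. k \<noteq> a \<and> k \<noteq> b \<longrightarrow> s k = u k) = (\<forall>k. k \<noteq> a \<and> k \<noteq> b \<longrightarrow> s' k = u' k)"
    "s a = s' a" "u a = u' a" "s b = s' b" "u b = u' b"
    using h a by metis+
  then show "emb2 a b M s u = emb2 a b M s' u'"
    unfolding emb2_def by (simp only:)
qed (auto simp: emb2_def split: if_splits)

lemma acts_on_idop: "acts_on L S (idop L)"
proof (rule acts_onI)
  fix s u s' u' :: state
  assume "s \<in> states L" "u \<in> states L" "s' \<in> states L" "u' \<in> states L"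
    and h: "\<forall>k. k \<notin> S \<longrightarrow> s k = u k" "\<forall>k. k \<notin> S \<longrightarrow> s' k = u' k"
      "\<forall>k\<in>S. s k = s' k \<and> u k = u' k"
  moreover have "(s = u) = (s' = u')"
    unfolding fun_eq_iff using h by metis
  ultimately show "idop L s u = idop L s' u'"
    by (simp add: idop_def)
qed (auto simp: idop_def split: if_splits)

lemma acts_on_mult:
  assumes fin: "finite L" and A: "acts_on L S A" and B: "acts_on L S B"
  shows "acts_on L S (mult L A B)"
proof (rule acts_onI)
  fix s u k assume "mult L A B s u \<noteq> 0" "k \<notin> S"
  then have "(\<Sum>v\<in>states L. A s v * B v u) \<noteq> 0"
    by (auto simp: mult_def split: if_splits)
  then obtain v where "A s v * B v u \<noteq> 0"
    by (meson sum.not_neutral_contains_not_neutral)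
  then show "s k = u k"
    using A B \<open>k \<notin> S\<close> by (metis acts_on_supp mult_eq_0_iff)
next
  fix s u s' u'
  assume s: "s \<in> states L" and u: "u \<in> states L" and s': "s' \<in> states L" and u': "u' \<in> states L"
    and su: "\<forall>k. k \<notin> S \<longrightarrow> s k = u k" and su': "\<forall>k. k \<notin> S \<longrightarrow> s' k = u' k"
    and same: "\<forall>k\<in>S. s k = s' k \<and> u k = u' k"
  define V where "V = (\<lambda>s. {v \<in> states L. \<forall>k. k \<notin> S \<longrightarrow> v k = s k})"
  define h where "h = (\<lambda>s' v. (\<lambda>k. if k \<in> S then v k else s' k) :: state)"
  have V: "(\<Sum>v\<in>states L. A x v * B v y) = (\<Sum>v\<in>V x. A x v * B v y)" for x y
  proof (rule sum.mono_neutral_right)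
    show "\<forall>v\<in>states L - V x. A x v * B v y = 0"
      using acts_on_supp[OF A] by (fastforce simp: V_def)
  qed (auto simp: V_def fin finite_states)
  have h_states: "x \<in> states L \<Longrightarrow> v \<in> states L \<Longrightarrow> h x v \<in> states L" for x v
    by (auto simp: h_def states_def)
  have "(\<Sum>v\<in>V s. A s v * B v u) = (\<Sum>v\<in>V s'. A s' v * B v u')"
  proof (rule sum.reindex_bij_witness[of _ "h s" "h s'"])
    fix v assume v: "v \<in> V s"
    have "A s' (h s' v) = A s v"
      by (rule acts_on_dep[OF A s' _ s]) (use v s' su su' same h_states[of s' v] in \<open>auto simp: h_def V_def\<close>)
    moreover have "B (h s' v) u' = B v u"
      by (rule acts_on_dep[OF B _ u' _ u]) (use v s' su su' same h_states[of s' v] in \<open>auto simp: h_def V_def\<close>)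
    ultimately show "A s' (h s' v) * B (h s' v) u' = A s v * B v u"
      by simp
  qed (use s s' h_states in \<open>auto simp: h_def V_def\<close>)
  then show "mult L A B s u = mult L A B s' u'"
    using s u s' u' V by (simp add: mult_def)
qed

lemma acts_on_prodops: "finite L \<Longrightarrow> \<forall>A\<in>set As. acts_on L S A \<Longrightarrow> acts_on L S (prodops L As)"
  by (induction As) (auto intro: acts_on_mult acts_on_idop)

lemma mult_disjoint_legs_entry:
  assumes fin: "finite L" and A: "acts_on L S A" and B: "acts_on L T B" and "S \<inter> T = {}"
    and s: "s \<in> states L" and u: "u \<in> states L"
  defines "v \<equiv> \<lambda>k. if k \<in> S then u k else s k"
  shows "mult L A B s u = A s v * B v u"
proof -
  have "(\<Sum>w\<in>states L. A s w * B w u) = (\<Sum>w\<in>{v}. A s w * B w u)"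
  proof (rule sum.mono_neutral_right)
    show "\<forall>w\<in>states L - {v}. A s w * B w u = 0"
    proof (intro ballI)
      fix w assume w: "w \<in> states L - {v}"
      have "w \<noteq> v" using w by simp
      then obtain k where "w k \<noteq> v k" by auto
      then have "A s w = 0 \<or> B w u = 0"
        using acts_on_supp[OF A, of s w k] acts_on_supp[OF B, of w u k] \<open>S \<inter> T = {}\<close>
        by (auto simp: v_def split: if_splits)
      then show "A s w * B w u = 0" by auto
    qed
    show "finite (states L)" using fin by (rule finite_states)
    show "{v} \<subseteq> states L" using s u by (auto simp: v_def states_def)
  qed
  then show ?thesis
    using s u by (simp add: mult_def)
qed

lemma mult_commute_disjoint_legs:
  assumes fin: "finite L" and A: "acts_on L S A" and B: "acts_on L T B" and dis: "S \<inter> T = {}"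
  shows "mult L A B = mult L B A"
proof (intro ext)
  fix s u
  show "mult L A B s u = mult L B A s u"
  proof (cases "s \<in> states L \<and> u \<in> states L")
    case False
    then show ?thesis by (auto simp: mult_def)
  next
    case True
    then have s: "s \<in> states L" and u: "u \<in> states L" by auto
    define v where "v = (\<lambda>k. if k \<in> S then u k else s k)"
    define w where "w = (\<lambda>k. if k \<in> T then u k else s k)"
    have vw: "v \<in> states L" "w \<in> states L"
      using s u by (auto simp: v_def w_def states_def)
    have "A s v * B v u = B s w * A w u"
    proof (cases "\<forall>k. k \<notin> S \<and> k \<notin> T \<longrightarrow> s k = u k")
      case True
      have "A s v = A w u"
        by (rule acts_on_dep[OF A s vw(1) vw(2) u]) (use True dis in \<open>auto simp: v_def w_def\<close>)
      moreover have "B v u = B s w"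
        by (rule acts_on_dep[OF B vw(1) u s vw(2)]) (use True dis in \<open>auto simp: v_def w_def\<close>)
      ultimately show ?thesis by simp
    next
      case False
      then obtain k where k: "k \<notin> S" "k \<notin> T" "s k \<noteq> u k" by auto
      have "v k = s k" "w k = s k"
        using k by (simp_all add: v_def w_def)
      then have "B v u = 0" "A w u = 0"
        using acts_on_supp[OF B, of v u k] acts_on_supp[OF A, of w u k] k by auto
      then show ?thesis by simp
    qed
    moreover have "S \<inter> T = T \<inter> S" by blast
    ultimately show ?thesis
      using mult_disjoint_legs_entry[OF fin A B dis s u] mult_disjoint_legs_entry[OF fin B A _ s u]
        dis by (simp add: v_def w_def)
  qed
qed

section \<open>The partial trace over the auxiliary leg\<close>

lemma sum_states_insert:
  assumes "finite L" "a \<notin> L"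
  shows "sum f (states (insert a L)) = (\<Sum>w\<in>states L. \<Sum>b\<in>UNIV. f (w(a := b)))"
proof -
  have "sum f (states (insert a L)) = (\<Sum>x\<in>states L \<times> UNIV. f ((\<lambda>(w, b). w(a := b)) x))"
  proof (rule sum_reindex_support)
    show "inj_on (\<lambda>(w, b). w(a := b)) (states L \<times> UNIV)"
    proof (rule inj_onI, clarsimp)
      fix w b w' b' assume w: "w \<in> states L" "w' \<in> states L" and e: "w(a := b) = w'(a := b')"
      have "w k = w' k" for k
        using fun_cong[OF e, of k] w assms(2) by (cases "k = a") (auto simp: states_def)
      then show "w = w' \<and> b = b'"
        using fun_cong[OF e, of a] by auto
    qed
    show "\<forall>v\<in>states (insert a L). f v \<noteq> 0 \<longrightarrow> v \<in> (\<lambda>(w, b). w(a := b)) ` (states L \<times> UNIV)"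
    proof (intro ballI impI)
      fix v assume "v \<in> states (insert a L)"
      then have "v(a := False) \<in> states L" "v = (\<lambda>(w, b). w(a := b)) (v(a := False), v a)"
        by (auto simp: states_def)
      then show "v \<in> (\<lambda>(w, b). w(a := b)) ` (states L \<times> UNIV)" by blast
    qed
    show "finite (states (insert a L))"
      using assms(1) by (simp add: finite_states)
  qed (auto simp: states_def)
  then show ?thesis
    by (simp add: sum.cartesian_product prod.case_distrib)
qed

lemma sum_states_leg0:
  "sum f (states {0..n}) = (\<Sum>w\<in>states {1..n}. \<Sum>b\<in>UNIV. f (w(0 := b)))"
proof -
  have "{0..n} = insert 0 {1..n}" by auto
  then show ?thesis by (simp add: sum_states_insert)
qed

lemma states_leg0_upd: "s \<in> states {1..n} \<Longrightarrow> s(0 := b) \<in> states {0..n}"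
  by (auto simp: states_def)

lemma states_leg0_False: "s \<in> states {1..n} \<Longrightarrow> \<not> s 0"
  by (auto simp: states_def)

lemma states_leg0_subset: "s \<in> states {1..n} \<Longrightarrow> s \<in> states {0..n}"
  by (auto simp: states_def)

lemma acts_on_entry_upd_leg0:
  assumes Z: "acts_on {0..n} S Z" and S: "0 \<notin> S" and w: "w \<in> states {1..n}" and u: "u \<in> states {1..n}"
  shows "Z (w(0 := b)) (u(0 := b')) = (if b = b' then Z w u else 0)"
proof (cases "b = b'")
  case False
  then show ?thesis
    using acts_on_supp[OF Z _ S, of "w(0 := b)" "u(0 := b')"] by auto
next
  case True
  show ?thesis
  proof (cases "\<forall>k. k \<notin> S \<longrightarrow> w k = u k")
    case True
    have "Z (w(0 := b)) (u(0 := b)) = Z w u"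
      by (rule acts_on_dep[OF Z]) (use w u True S in \<open>auto simp: states_leg0_upd states_leg0_subset\<close>)
    then show ?thesis using \<open>b = b'\<close> by simp
  next
    case False
    then obtain k where k: "k \<notin> S" "w k \<noteq> u k" by auto
    then have "k \<noteq> 0" using states_leg0_False[OF w] states_leg0_False[OF u] by metis
    then have "Z w u = 0" "Z (w(0 := b)) (u(0 := b)) = 0"
      using acts_on_supp[OF Z _ k(1), of w u] acts_on_supp[OF Z _ k(1), of "w(0 := b)" "u(0 := b)"] k
      by auto
    then show ?thesis using \<open>b = b'\<close> by simp
  qed
qed

lemma ptrace0_mult_right:
  assumes Z: "acts_on {0..n} S Z" and S: "0 \<notin> S"
  shows "ptrace0 n (mult {0..n} X Z) = mult {1..n} (ptrace0 n X) Z"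
proof (intro ext)
  fix s u
  show "ptrace0 n (mult {0..n} X Z) s u = mult {1..n} (ptrace0 n X) Z s u"
  proof (cases "s \<in> states {1..n} \<and> u \<in> states {1..n}")
    case True
    then have s: "s \<in> states {1..n}" and u: "u \<in> states {1..n}" by auto
    have "ptrace0 n (mult {0..n} X Z) s u =
      (\<Sum>b\<in>UNIV. \<Sum>w\<in>states {1..n}. \<Sum>b'\<in>UNIV. X (s(0 := b)) (w(0 := b')) * Z (w(0 := b')) (u(0 := b)))"
      using s u by (simp add: ptrace0_def mult_def states_leg0_upd sum_states_leg0)
    also have "\<dots> = (\<Sum>b\<in>UNIV. \<Sum>w\<in>states {1..n}. X (s(0 := b)) (w(0 := b)) * Z w u)"
      using acts_on_entry_upd_leg0[OF Z S _ u] by (intro sum.cong refl) (simp add: UNIV_bool)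
    also have "\<dots> = (\<Sum>w\<in>states {1..n}. (\<Sum>b\<in>UNIV. X (s(0 := b)) (w(0 := b))) * Z w u)"
      by (simp add: sum_distrib_right) (rule sum.swap)
    also have "\<dots> = mult {1..n} (ptrace0 n X) Z s u"
      using s u by (auto simp: mult_def ptrace0_def intro!: sum.cong)
    finally show ?thesis .
  qed (auto simp: ptrace0_def mult_def)
qed

lemma ptrace0_mult_left:
  assumes Z: "acts_on {0..n} S Z" and S: "0 \<notin> S"
  shows "ptrace0 n (mult {0..n} Z X) = mult {1..n} Z (ptrace0 n X)"
proof (intro ext)
  fix s u
  show "ptrace0 n (mult {0..n} Z X) s u = mult {1..n} Z (ptrace0 n X) s u"
  proof (cases "s \<in> states {1..n} \<and> u \<in> states {1..n}")
    case True
    then have s: "s \<in> states {1..n}" and u: "u \<in> states {1..n}" by auto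
    have "ptrace0 n (mult {0..n} Z X) s u =
      (\<Sum>b\<in>UNIV. \<Sum>w\<in>states {1..n}. \<Sum>b'\<in>UNIV. Z (s(0 := b)) (w(0 := b')) * X (w(0 := b')) (u(0 := b)))"
      using s u by (simp add: ptrace0_def mult_def states_leg0_upd sum_states_leg0)
    also have "\<dots> = (\<Sum>b\<in>UNIV. \<Sum>w\<in>states {1..n}. Z s w * X (w(0 := b)) (u(0 := b)))"
      using acts_on_entry_upd_leg0[OF Z S s] by (intro sum.cong refl) (simp add: UNIV_bool)
    also have "\<dots> = (\<Sum>w\<in>states {1..n}. Z s w * (\<Sum>b\<in>UNIV. X (w(0 := b)) (u(0 := b))))"
      by (simp add: sum_distrib_left) (rule sum.swap)
    also have "\<dots> = mult {1..n} Z (ptrace0 n X) s u"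
      using s u by (auto simp: mult_def ptrace0_def intro!: sum.cong)
    finally show ?thesis .
  qed (auto simp: ptrace0_def mult_def)
qed

lemma ptrace0_mult_left_restrict:
  "acts_on {0..n} S Z \<Longrightarrow> 0 \<notin> S \<Longrightarrow> restrict_op {1..n} Z = Z' \<Longrightarrow>
    ptrace0 n (mult {0..n} Z X) = mult {1..n} Z' (ptrace0 n X)"
  by (metis ptrace0_mult_left mult_restrict_left)

lemma ptrace0_mult_right_restrict:
  "acts_on {0..n} S Z \<Longrightarrow> 0 \<notin> S \<Longrightarrow> restrict_op {1..n} Z = Z' \<Longrightarrow>
    ptrace0 n (mult {0..n} X Z) = mult {1..n} (ptrace0 n X) Z'"
  by (metis ptrace0_mult_right mult_restrict_right)

lemma restrict_ptrace0 [simp]: "restrict_op {1..n} (ptrace0 n A) = ptrace0 n A"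
  unfolding ptrace0_def restrict_op_def by (intro ext) auto

lemma restrict_mult_off0:
  assumes A: "acts_on {0..n} S A" and S: "0 \<notin> S"
  shows "restrict_op {1..n} (mult {0..n} A B) = mult {1..n} A B"
proof (intro ext)
  fix s u
  show "restrict_op {1..n} (mult {0..n} A B) s u = mult {1..n} A B s u"
  proof (cases "s \<in> states {1..n} \<and> u \<in> states {1..n}")
    case True
    have "(\<Sum>v\<in>states {0..n}. A s v * B v u) = (\<Sum>v\<in>states {1..n}. A s v * B v u)"
    proof (rule sum.mono_neutral_right)
      show "\<forall>v\<in>states {0..n} - states {1..n}. A s v * B v u = 0"
      proof
        fix v assume v: "v \<in> states {0..n} - states {1..n}"
        then have "v 0"
          by (auto simp: states_def) (metis One_nat_def Suc_leI neq0_conv)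
        then have "A s v = 0"
          using True states_leg0_False acts_on_supp[OF A _ S, of s v] by auto
        then show "A s v * B v u = 0" by simp
      qed
      show "finite (states {0..n})" by (simp add: finite_states)
    qed (auto simp: states_def)
    then show ?thesis using True by (simp add: restrict_op_def mult_def states_leg0_subset)
  qed (auto simp: restrict_op_def mult_def)
qed

lemma restrict_prodops_off0:
  assumes "0 \<notin> S" "\<forall>A\<in>set As. acts_on {0..n} S A"
  shows "restrict_op {1..n} (prodops {0..n} As) = prodops {1..n} As"
  using assms(2)
proof (induction As)
  case Nil
  show ?case
    unfolding prodops_Nil restrict_op_def idop_def using states_leg0_subset by (intro ext) auto
next
  case (Cons A As)
  have "restrict_op {1..n} (prodops {0..n} (A # As)) = mult {1..n} A (prodops {0..n} As)"
    using restrict_mult_off0[of n S A] Cons.prems assms(1) by simp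
  also have "\<dots> = mult {1..n} A (restrict_op {1..n} (prodops {0..n} As))"
    by simp
  also have "\<dots> = prodops {1..n} (A # As)"
    using Cons by simp
  finally show ?case .
qed

lemma ptrace0_emb2_flip:
  assumes i: "i \<in> {1..n}"
  shows "ptrace0 n (mult {0..n} (emb2 0 i M) (flip_op {0..n} 0 i)) =
    restrict_op {1..n} (emb1 i (\<lambda>c d. \<Sum>b\<in>UNIV. M b c d b))"
proof (intro ext)
  fix s u
  have i0: "i \<noteq> 0" "i \<in> {0..n}" using i by auto
  show "ptrace0 n (mult {0..n} (emb2 0 i M) (flip_op {0..n} 0 i)) s u =
    restrict_op {1..n} (emb1 i (\<lambda>c d. \<Sum>b\<in>UNIV. M b c d b)) s u"
  proof (cases "s \<in> states {1..n} \<and> u \<in> states {1..n}")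
    case True
    then have s: "s \<in> states {1..n}" and u: "u \<in> states {1..n}" by auto
    let ?u = "\<lambda>b. u(0 := b) \<circ> transpose 0 i"
    have x: "((s(0 := b)) k = ?u b k) = (s k = u k)" if "k \<noteq> 0" "k \<noteq> i" for k b
      using that by simp
    have e: "(\<forall>k. k \<noteq> 0 \<and> k \<noteq> i \<longrightarrow> (s(0 := b)) k = ?u b k) = (\<forall>k. k \<noteq> i \<longrightarrow> s k = u k)" for b
    proof
      assume H: "\<forall>k. k \<noteq> 0 \<and> k \<noteq> i \<longrightarrow> (s(0 := b)) k = ?u b k"
      show "\<forall>k. k \<noteq> i \<longrightarrow> s k = u k"
      proof (intro allI impI)
        fix k assume "k \<noteq> i"
        then show "s k = u k"
          using H x[of k b] states_leg0_False[OF s] states_leg0_False[OF u] by (cases "k = 0") auto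
      qed
    qed (use x in blast)
    have v: "(s(0 := b)) 0 = b" "(s(0 := b)) i = s i" "?u b 0 = u i" "?u b i = b" for b
      using i0 by auto
    have "ptrace0 n (mult {0..n} (emb2 0 i M) (flip_op {0..n} 0 i)) s u =
        (\<Sum>b\<in>UNIV. emb2 0 i M (s(0 := b)) (?u b))"
      using s u i0 by (simp add: ptrace0_def mult_flip_right restrict_op_def states_leg0_upd)
    also have "\<dots> = (\<Sum>b\<in>UNIV. if \<forall>k. k \<noteq> i \<longrightarrow> s k = u k then M b (s i) (u i) b else 0)"
      unfolding emb2_def e v ..
    also have "\<dots> = restrict_op {1..n} (emb1 i (\<lambda>c d. \<Sum>b\<in>UNIV. M b c d b)) s u"
      using s u by (cases "\<forall>k. k \<noteq> i \<longrightarrow> s k = u k") (simp_all add: restrict_op_def emb1_def del: not_all)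
    finally show ?thesis .
  qed (auto simp: ptrace0_def restrict_op_def)
qed

section \<open>Scalar identities for the \<open>R\<close>- and \<open>K\<close>-matrices\<close>

definition rpoly :: "complex \<Rightarrow> complex \<Rightarrow> bool \<Rightarrow> bool \<Rightarrow> bool \<Rightarrow> bool \<Rightarrow> complex" where
  "rpoly \<kappa> x a b c d =
     (if a \<and> b \<and> c \<and> d then 1 - \<kappa>^2 * x
      else if a \<and> \<not> b \<and> c \<and> \<not> d then \<kappa> * (1 - x)
      else if a \<and> \<not> b \<and> \<not> c \<and> d then 1 - \<kappa>^2
      else if \<not> a \<and> b \<and> c \<and> \<not> d then (1 - \<kappa>^2) * x
      else if \<not> a \<and> b \<and> \<not> c \<and> d then \<kappa> * (1 - x)
      else if \<not> a \<and> \<not> b \<and> \<not> c \<and> \<not> d then 1 - \<kappa>^2 * x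
      else 0)"

lemma rmat_eq_rpoly: "rmat \<kappa> x = (\<lambda>a b c d. (1 / (1 - \<kappa>^2 * x)) * rpoly \<kappa> x a b c d)"
  by (simp add: rmat_def rpoly_def fun_eq_iff)

text \<open>The Yang--Baxter equation \<open>R\<^sub>1\<^sub>2(\<alpha>) R\<^sub>1\<^sub>3(\<alpha>\<beta>) R\<^sub>2\<^sub>3(\<beta>) = R\<^sub>2\<^sub>3(\<beta>) R\<^sub>1\<^sub>3(\<alpha>\<beta>) R\<^sub>1\<^sub>2(\<alpha>)\<close>
  for the numerator of the \<open>R\<close>-matrix, in indices.\<close>

lemma rpoly_ybe:
  "(\<Sum>r\<in>UNIV. \<Sum>r'\<in>UNIV. rpoly \<kappa> \<alpha> p1 p2 r r' *
      (\<Sum>s\<in>UNIV. rpoly \<kappa> (\<alpha> * \<beta>) r p3 q1 s * rpoly \<kappa> \<beta> r' s q2 q3))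
 = (\<Sum>r'\<in>UNIV. \<Sum>r''\<in>UNIV. rpoly \<kappa> \<beta> p2 p3 r' r'' *
      (\<Sum>s\<in>UNIV. rpoly \<kappa> (\<alpha> * \<beta>) p1 r'' s q3 * rpoly \<kappa> \<alpha> s r' q1 q2))"
  by (cases p1; cases p2; cases p3; cases q1; cases q2; cases q3)
    (simp_all add: UNIV_bool rpoly_def, algebra+)

lemma rmat_unitarity:
  fixes \<kappa> \<alpha> \<beta> :: complex
  assumes "\<alpha> * \<beta> = 1" "1 - \<kappa>^2 * \<alpha> \<noteq> 0" "1 - \<kappa>^2 * \<beta> \<noteq> 0"
  shows "(\<Sum>r\<in>UNIV. \<Sum>r'\<in>UNIV. rmat \<kappa> \<alpha> p1 p2 r r' * rmat \<kappa> \<beta> r' r q2 q1) =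
    (if p1 = q1 \<and> p2 = q2 then 1 else 0)"
proof -
  have a0: "\<alpha> \<noteq> 0" and b: "\<beta> = 1 / \<alpha>"
    using assms(1) by (auto simp: eq_divide_eq mult.commute)
  have n: "\<kappa>^2 * \<alpha> \<noteq> 1" "\<kappa>^2 \<noteq> \<alpha>" "\<alpha> \<noteq> \<kappa>^2"
    using assms(2,3) b a0 by (auto simp: field_simps)
  show ?thesis
    by (cases p1; cases p2; cases q1; cases q2)
      (simp_all add: UNIV_bool rmat_def b divide_simps n a0, algebra+)
qed

lemma kmat_unitarity:
  fixes \<kappa>n \<upsilon>n \<psi>n x :: complex
  assumes "\<kappa>n \<noteq> 0" "\<upsilon>n \<noteq> 0" "\<psi>n \<noteq> 0" "x \<noteq> 0"
    and "1 - \<kappa>n * \<upsilon>n * x \<noteq> 0" "1 + \<kappa>n * x / \<upsilon>n \<noteq> 0"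
      "1 - \<kappa>n * \<upsilon>n * (1 / x) \<noteq> 0" "1 + \<kappa>n * (1 / x) / \<upsilon>n \<noteq> 0"
  shows "(\<Sum>r\<in>UNIV. kmat \<kappa>n \<upsilon>n \<psi>n x p r * kmat \<kappa>n \<upsilon>n \<psi>n (1 / x) r q) = (if p = q then 1 else 0)"
proof -
  have n: "\<kappa>n * \<upsilon>n * x \<noteq> 1" "\<upsilon>n + \<kappa>n * x \<noteq> 0" "\<kappa>n * \<upsilon>n \<noteq> x" "x \<noteq> \<kappa>n * \<upsilon>n"
    "x * \<upsilon>n + \<kappa>n \<noteq> 0" "\<kappa>n + x * \<upsilon>n \<noteq> 0" "\<kappa>n + \<upsilon>n * x \<noteq> 0" "\<upsilon>n * x + \<kappa>n \<noteq> 0"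
    using assms by (auto simp: field_simps)
  show ?thesis
    by (cases p; cases q) (simp_all add: UNIV_bool kmat_def divide_simps n assms(1-4), algebra+)
qed

definition dressed_kbar :: "complex \<Rightarrow> complex \<Rightarrow> complex \<Rightarrow> complex \<Rightarrow> complex \<Rightarrow> bool \<Rightarrow> bool \<Rightarrow> complex" where
  "dressed_kbar \<kappa> \<kappa>0 \<upsilon>0 \<psi>0 y p q = theta \<kappa> p p * kbar \<kappa>0 \<upsilon>0 \<psi>0 y p q * theta \<kappa> q q"

lemma theta_matrix_product:
  "(\<lambda>p q. \<Sum>r\<in>UNIV. theta \<kappa> p r * (\<Sum>r'\<in>UNIV. K r r' * theta \<kappa> r' q)) =
    (\<lambda>p q. theta \<kappa> p p * K p q * theta \<kappa> q q)"
  by (intro ext) (simp add: UNIV_bool theta_def)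

lemma theta_sandwich:
  "\<kappa> \<noteq> 0 \<Longrightarrow> theta \<kappa> b b * X * theta \<kappa> p p = (if b = p then (if b then X / \<kappa> else X * \<kappa>) else X)"
proof -
  assume "\<kappa> \<noteq> 0"
  moreover have "csqrt \<kappa> * csqrt \<kappa> = \<kappa>"
    by (metis power2_csqrt power2_eq_square)
  ultimately show ?thesis
    by (auto simp: theta_def field_simps)
qed

text \<open>The local matrix left on leg \<open>i\<close> after tracing out the auxiliary leg of
  \<open>\<theta> k\<^sup>-(\<kappa>\<^sup>2x) \<theta> r(x\<^sup>2) P\<close>.\<close>

definition boundary_fusion :: "complex \<Rightarrow> complex \<Rightarrow> complex \<Rightarrow> complex \<Rightarrow> complex \<Rightarrow> bool \<Rightarrow> bool \<Rightarrow> complex" where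
  "boundary_fusion \<kappa> \<kappa>0 \<upsilon>0 \<psi>0 x c d =
    (\<Sum>b\<in>UNIV. \<Sum>p\<in>UNIV. dressed_kbar \<kappa> \<kappa>0 \<upsilon>0 \<psi>0 (\<kappa>^2 * x) b p * rmat \<kappa> (x^2) p c d b)"

lemma boundary_fusion_eq:
  fixes \<kappa> \<kappa>0 \<upsilon>0 \<psi>0 x :: complex
  assumes k: "\<kappa> \<noteq> 0" "\<kappa>0 \<noteq> 0" "\<upsilon>0 \<noteq> 0" "\<psi>0 \<noteq> 0"
    and d1: "1 - \<kappa>0 * \<upsilon>0 * (\<kappa>^2 * x) \<noteq> 0" "1 + \<kappa>0 * (\<kappa>^2 * x) / \<upsilon>0 \<noteq> 0"
    and d2: "1 - \<kappa>0 * \<upsilon>0 * x \<noteq> 0" "1 + \<kappa>0 * x / \<upsilon>0 \<noteq> 0"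
    and d3: "1 - \<kappa>^2 * x^2 \<noteq> 0"
    and d4: "1 - \<kappa>^2 * \<kappa>0 * \<upsilon>0 * x \<noteq> 0" "1 + \<kappa>^2 * \<kappa>0 * x / \<upsilon>0 \<noteq> 0"
  shows "boundary_fusion \<kappa> \<kappa>0 \<upsilon>0 \<psi>0 x c d = Phi_bdy \<kappa> \<kappa>0 \<upsilon>0 x * kbar \<kappa>0 \<upsilon>0 \<psi>0 x c d"
proof -
  have n: "\<kappa>^2 * \<kappa>0 * \<upsilon>0 * x \<noteq> 1" "\<kappa>0 * \<upsilon>0 * (\<kappa>^2 * x) \<noteq> 1"
    "\<upsilon>0 + \<kappa>^2 * \<kappa>0 * x \<noteq> 0" "\<upsilon>0 + \<kappa>0 * (\<kappa>^2 * x) \<noteq> 0"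
    "\<kappa>0 * \<upsilon>0 * x \<noteq> 1" "\<upsilon>0 + \<kappa>0 * x \<noteq> 0" "\<kappa>^2 * x^2 \<noteq> 1"
    using d1 d2 d3 d4 k(3) by (auto simp: field_simps)
  show ?thesis
    unfolding boundary_fusion_def dressed_kbar_def
    apply (cases c; cases d)
       apply (simp_all add: UNIV_bool theta_sandwich[OF k(1)] rmat_def kbar_def Phi_bdy_def)
       apply (simp_all add: divide_simps n k)
       apply algebra
      apply (intro disjI2; algebra)
     apply (intro disjI2; algebra)
    apply algebra
    done
qed

text \<open>The denominators of \<open>k\<^sup>-(x)\<close> cancel against \<open>\<Phi>\<^sub>b\<^sub>d\<^sub>y(x)\<close>, so unlike
  \<open>boundary_fusion_eq\<close> this needs no regularity of \<open>k\<^sup>-\<close> at \<open>x\<close>.\<close>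

lemma boundary_fusion_mult_kbar_inverse:
  fixes \<kappa> \<kappa>0 \<upsilon>0 \<psi>0 x :: complex
  assumes k: "\<kappa> \<noteq> 0" "\<kappa>0 \<noteq> 0" "\<upsilon>0 \<noteq> 0" "\<psi>0 \<noteq> 0" "x \<noteq> 0"
    and d1: "1 - \<kappa>0 * \<upsilon>0 * (\<kappa>^2 * x) \<noteq> 0" "1 + \<kappa>0 * (\<kappa>^2 * x) / \<upsilon>0 \<noteq> 0"
    and d2: "1 - \<kappa>0 * \<upsilon>0 * (1 / x) \<noteq> 0" "1 + \<kappa>0 * (1 / x) / \<upsilon>0 \<noteq> 0"
    and d3: "1 - \<kappa>^2 * x^2 \<noteq> 0"
    and d4: "1 - \<kappa>^2 * \<kappa>0 * \<upsilon>0 * x \<noteq> 0" "1 + \<kappa>^2 * \<kappa>0 * x / \<upsilon>0 \<noteq> 0"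
  shows "(\<Sum>r\<in>UNIV. boundary_fusion \<kappa> \<kappa>0 \<upsilon>0 \<psi>0 x c r * kbar \<kappa>0 \<upsilon>0 \<psi>0 (1 / x) r d) =
    Phi_bdy \<kappa> \<kappa>0 \<upsilon>0 x * (if c = d then 1 else 0)"
proof -
  have n: "\<kappa>^2 * \<kappa>0 * \<upsilon>0 * x \<noteq> 1" "\<kappa>0 * \<upsilon>0 * (\<kappa>^2 * x) \<noteq> 1"
    "\<upsilon>0 + \<kappa>^2 * \<kappa>0 * x \<noteq> 0" "\<upsilon>0 + \<kappa>0 * (\<kappa>^2 * x) \<noteq> 0"
    "\<kappa>0 * \<upsilon>0 \<noteq> x" "x * \<upsilon>0 + \<kappa>0 \<noteq> 0" "\<kappa>0 + x * \<upsilon>0 \<noteq> 0" "\<kappa>0 + \<upsilon>0 * x \<noteq> 0"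
    "\<upsilon>0 * x + \<kappa>0 \<noteq> 0" "\<kappa>^2 * x^2 \<noteq> 1" "x \<noteq> \<kappa>0 * \<upsilon>0"
    using d1 d2 d3 d4 k(3) k(5) by (auto simp: field_simps)
  show ?thesis
    unfolding boundary_fusion_def dressed_kbar_def sum_distrib_right
    by (cases c; cases d)
      (simp_all add: UNIV_bool theta_sandwich[OF k(1)] rmat_def kbar_def Phi_bdy_def divide_simps n k,
        algebra+)
qed

section \<open>Operator identities: Yang--Baxter, unitarity and trains\<close>

definition mult3 :: "mat3 \<Rightarrow> mat3 \<Rightarrow> mat3" where
  "mult3 M N = (\<lambda>p1 p2 p3 q1 q2 q3.
     \<Sum>r\<in>UNIV. \<Sum>r'\<in>UNIV. \<Sum>r''\<in>UNIV. M p1 p2 p3 r r' r'' * N r r' r'' q1 q2 q3)"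

definition rpoly12 :: "complex \<Rightarrow> complex \<Rightarrow> mat3" where
  "rpoly12 \<kappa> \<alpha> = (\<lambda>x y z x' y' z'. rpoly \<kappa> \<alpha> x y x' y' * (if z = z' then 1 else 0))"

definition rpoly13 :: "complex \<Rightarrow> complex \<Rightarrow> mat3" where
  "rpoly13 \<kappa> \<alpha> = (\<lambda>x y z x' y' z'. rpoly \<kappa> \<alpha> x z x' z' * (if y = y' then 1 else 0))"

definition rpoly23 :: "complex \<Rightarrow> complex \<Rightarrow> mat3" where
  "rpoly23 \<kappa> \<alpha> = (\<lambda>x y z x' y' z'. rpoly \<kappa> \<alpha> y z y' z' * (if x = x' then 1 else 0))"

lemma mult3_rpoly13_rpoly23:
  "mult3 (rpoly13 \<kappa> \<gamma>) (rpoly23 \<kappa> \<beta>) =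
    (\<lambda>p1 p2 p3 q1 q2 q3. \<Sum>s\<in>UNIV. rpoly \<kappa> \<gamma> p1 p3 q1 s * rpoly \<kappa> \<beta> p2 s q2 q3)"
  by (intro ext) (simp add: mult3_def rpoly13_def rpoly23_def UNIV_bool)

lemma mult3_rpoly13_rpoly12:
  "mult3 (rpoly13 \<kappa> \<gamma>) (rpoly12 \<kappa> \<alpha>) =
    (\<lambda>p1 p2 p3 q1 q2 q3. \<Sum>r\<in>UNIV. rpoly \<kappa> \<gamma> p1 p3 r q3 * rpoly \<kappa> \<alpha> r p2 q1 q2)"
  by (intro ext) (simp add: mult3_def rpoly13_def rpoly12_def UNIV_bool)

lemma mult3_rpoly12_left:
  "mult3 (rpoly12 \<kappa> \<alpha>) X =
    (\<lambda>p1 p2 p3 q1 q2 q3. \<Sum>r\<in>UNIV. \<Sum>r'\<in>UNIV. rpoly \<kappa> \<alpha> p1 p2 r r' * X r r' p3 q1 q2 q3)"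
  by (intro ext) (simp add: mult3_def rpoly12_def UNIV_bool)

lemma mult3_rpoly23_left:
  "mult3 (rpoly23 \<kappa> \<beta>) Y =
    (\<lambda>p1 p2 p3 q1 q2 q3. \<Sum>r'\<in>UNIV. \<Sum>r''\<in>UNIV. rpoly \<kappa> \<beta> p2 p3 r' r'' * Y p1 r' r'' q1 q2 q3)"
  by (intro ext) (simp add: mult3_def rpoly23_def UNIV_bool)

lemma rmat_ybe_op:
  assumes "finite L" "a \<in> L" "b \<in> L" "c \<in> L" "a \<noteq> b" "a \<noteq> c" "b \<noteq> c"
  shows "mult L (emb2 a b (rmat \<kappa> \<alpha>)) (mult L (emb2 a c (rmat \<kappa> (\<alpha> * \<beta>))) (emb2 b c (rmat \<kappa> \<beta>)))
       = mult L (emb2 b c (rmat \<kappa> \<beta>)) (mult L (emb2 a c (rmat \<kappa> (\<alpha> * \<beta>))) (emb2 a b (rmat \<kappa> \<alpha>)))"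
proof -
  have emb3: "emb2 a b (rpoly \<kappa> \<alpha>) = emb3 a b c (rpoly12 \<kappa> \<alpha>)"
    "emb2 a c (rpoly \<kappa> (\<alpha> * \<beta>)) = emb3 a b c (rpoly13 \<kappa> (\<alpha> * \<beta>))"
    "emb2 b c (rpoly \<kappa> \<beta>) = emb3 a b c (rpoly23 \<kappa> \<beta>)"
    unfolding rpoly12_def rpoly13_def rpoly23_def
    using assms by (auto intro: emb2_as_emb3_12 emb2_as_emb3_13 emb2_as_emb3_23)
  have mult: "mult L (emb3 a b c M) (emb3 a b c N) = restrict_op L (emb3 a b c (mult3 M N))" for M N
    unfolding mult3_def using assms by (rule mult_emb3_emb3)
  have ybe: "mult3 (rpoly12 \<kappa> \<alpha>) (mult3 (rpoly13 \<kappa> (\<alpha> * \<beta>)) (rpoly23 \<kappa> \<beta>)) =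
      mult3 (rpoly23 \<kappa> \<beta>) (mult3 (rpoly13 \<kappa> (\<alpha> * \<beta>)) (rpoly12 \<kappa> \<alpha>))"
    unfolding mult3_rpoly13_rpoly23 mult3_rpoly12_left mult3_rpoly13_rpoly12 mult3_rpoly23_left
    using rpoly_ybe by blast
  show ?thesis
    unfolding rmat_eq_rpoly emb2_smult smult_mult_left smult_mult_right emb3 mult mult_restrict_right
    by (simp add: ybe mult.commute mult.left_commute)
qed

lemma rmat_unitarity_op:
  assumes "finite L" "a \<in> L" "b \<in> L" "a \<noteq> b"
    and "\<alpha> * \<beta> = 1" "1 - \<kappa>^2 * \<alpha> \<noteq> 0" "1 - \<kappa>^2 * \<beta> \<noteq> 0"
  shows "mult L (emb2 a b (rmat \<kappa> \<alpha>)) (emb2 b a (rmat \<kappa> \<beta>)) = idop L"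
proof -
  have "mult L (emb2 a b (rmat \<kappa> \<alpha>)) (emb2 b a (rmat \<kappa> \<beta>)) = restrict_op L
      (emb2 a b (\<lambda>p1 p2 q1 q2. \<Sum>r\<in>UNIV. \<Sum>r'\<in>UNIV. rmat \<kappa> \<alpha> p1 p2 r r' * rmat \<kappa> \<beta> r' r q2 q1))"
    unfolding emb2_swap_legs[OF assms(4)] using assms(1-4) by (simp add: mult_emb2_emb2)
  also have "\<dots> = restrict_op L (emb2 a b (\<lambda>p q p' q'. if p = p' \<and> q = q' then 1 else 0))"
    using rmat_unitarity[OF assms(5-7)] by simp
  also have "\<dots> = idop L"
    using assms(4) by (rule restrict_emb2_id)
  finally show ?thesis .
qed

lemma kmat_unitarity_op:
  assumes "finite L" "a \<in> L" "\<kappa>n \<noteq> 0" "\<upsilon>n \<noteq> 0" "\<psi>n \<noteq> 0" "x \<noteq> 0"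
    "1 - \<kappa>n * \<upsilon>n * x \<noteq> 0" "1 + \<kappa>n * x / \<upsilon>n \<noteq> 0"
    "1 - \<kappa>n * \<upsilon>n * (1 / x) \<noteq> 0" "1 + \<kappa>n * (1 / x) / \<upsilon>n \<noteq> 0"
  shows "mult L (emb1 a (kmat \<kappa>n \<upsilon>n \<psi>n x)) (emb1 a (kmat \<kappa>n \<upsilon>n \<psi>n (1 / x))) = idop L"
  using assms by (simp add: mult_emb1_emb1 kmat_unitarity restrict_emb1_id)

lemma prodops_telescope:
  assumes fin: "finite L" and inv: "\<forall>j\<in>set js. mult L (F j) (G j) = idop L"
  shows "mult L (prodops L (map F js)) (prodops L (map G (rev js))) = idop L"
  using inv
proof (induction js)
  case (Cons j js)
  have "mult L (prodops L (map F (j # js))) (prodops L (map G (rev (j # js)))) =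
      mult L (F j) (mult L (mult L (prodops L (map F js)) (prodops L (map G (rev js)))) (G j))"
    using fin by (simp add: prodops_snoc mult_assoc)
  also have "\<dots> = idop L"
    using Cons fin by simp
  finally show ?case .
qed (use fin in simp)

lemma prodops_train_exchange:
  assumes fin: "finite L"
    and legs: "\<forall>j\<in>set js. acts_on L {a, j} (F j) \<and> acts_on L {j, c} (H j)"
    and dis: "distinct js" "a \<notin> set js" "c \<notin> set js" "a \<noteq> c"
    and pair: "\<forall>j\<in>set js. mult L (F j) (mult L G (H j)) = mult L (H j) (mult L G (F j))"
  shows "mult L (prodops L (map F js)) (mult L G (prodops L (map H (rev js))))
       = mult L (prodops L (map H (rev js))) (mult L G (prodops L (map F js)))"
  using legs dis pair
proof (induction js)
  case (Cons j js)
  define PF where "PF = prodops L (map F js)"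
  define PH where "PH = prodops L (map H (rev js))"
  have IH: "mult L PF (mult L G PH) = mult L PH (mult L G PF)"
    unfolding PF_def PH_def using Cons by simp
  have PF: "acts_on L (insert a (set js)) PF"
    unfolding PF_def using Cons.prems(1) fin by (intro acts_on_prodops) (auto intro: acts_on_mono)
  have PH: "acts_on L (insert c (set js)) PH"
    unfolding PH_def using Cons.prems(1) fin by (intro acts_on_prodops) (auto intro: acts_on_mono)
  have Fj: "acts_on L {a, j} (F j)" and Hj: "acts_on L {j, c} (H j)"
    using Cons.prems(1) by auto
  have "mult L PF (H j) = mult L (H j) PF"
    by (rule mult_commute_disjoint_legs[OF fin PF Hj]) (use Cons.prems in auto)
  moreover have "mult L (F j) PH = mult L PH (F j)"
    by (rule mult_commute_disjoint_legs[OF fin Fj PH]) (use Cons.prems in auto)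
  moreover have "mult L (F j) (mult L G (H j)) = mult L (H j) (mult L G (F j))"
    using Cons.prems by auto
  ultimately have "mult L (F j) (mult L PF (mult L G (mult L PH (H j)))) =
      mult L PH (mult L (H j) (mult L G (mult L (F j) PF)))"
    using IH fin by (metis mult_assoc)
  then show ?case
    using fin by (simp add: prodops_snoc mult_assoc PF_def PH_def)
qed (use fin in simp)

text \<open>Since \<open>rcheck = r P\<close>, the two flips combine into a conjugation of \<open>Y\<close>.\<close>

lemma rcheck_sandwich:
  assumes fin: "finite L" and legs: "a \<in> L" "b \<in> L" "a \<noteq> b"
  shows "mult L (emb2 a b (rcheck \<kappa> \<alpha>)) (mult L Y (emb2 a b (rcheck \<kappa> \<beta>))) =
    mult L (emb2 a b (rmat \<kappa> \<alpha>)) (mult L (swap_conj a b Y) (emb2 b a (rmat \<kappa> \<beta>)))"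
proof -
  let ?P = "flip_op L a b"
  have "mult L (emb2 a b (rcheck \<kappa> \<alpha>)) (mult L Y (emb2 a b (rcheck \<kappa> \<beta>))) =
      mult L (mult L (emb2 a b (rmat \<kappa> \<alpha>)) ?P) (mult L Y (mult L (emb2 a b (rmat \<kappa> \<beta>)) ?P))"
    by (metis restrict_emb2_rcheck[OF assms] mult_restrict_left mult_restrict_right)
  also have "\<dots> = mult L (emb2 a b (rmat \<kappa> \<alpha>)) (mult L ?P (mult L (mult L Y (emb2 a b (rmat \<kappa> \<beta>))) ?P))"
    by (simp only: mult_assoc[OF fin])
  also have "\<dots> = mult L (emb2 a b (rmat \<kappa> \<alpha>)) (mult L (swap_conj a b Y) (emb2 b a (rmat \<kappa> \<beta>)))"
    using assms by (simp add: flip_sandwich swap_conj_mult swap_conj_emb2 swap_conj_restrict[symmetric])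
  finally show ?thesis .
qed

lemma prodops_rcheck_chain_left:
  assumes "1 \<le> m" "finite L" "{1..m} \<subseteq> L"
  shows "prodops L (map (\<lambda>j. emb2 j (j+1) (rcheck \<kappa> (a j))) (rev [1..<m]) @ [emb1 1 K] @
        map (\<lambda>j. emb2 j (j+1) (rcheck \<kappa> (b j))) [1..<m]) =
    prodops L (map (\<lambda>j. emb2 j m (rmat \<kappa> (a j))) (rev [1..<m]) @ [emb1 m K] @
        map (\<lambda>j. emb2 m j (rmat \<kappa> (b j))) [1..<m])"
  using assms
proof (induction m rule: nat_induct_at_least)
  case (Suc m)
  let ?LS = "\<lambda>m. map (\<lambda>j. emb2 j (j+1) (rcheck \<kappa> (a j))) (rev [1..<m]) @ [emb1 1 K] @
        map (\<lambda>j. emb2 j (j+1) (rcheck \<kappa> (b j))) [1..<m]"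
  let ?RS = "\<lambda>m k. map (\<lambda>j. emb2 j k (rmat \<kappa> (a j))) (rev [1..<m]) @ [emb1 k K] @
        map (\<lambda>j. emb2 k j (rmat \<kappa> (b j))) [1..<m]"
  have fin: "finite L" and legs: "m \<in> L" "Suc m \<in> L" "m \<noteq> Suc m"
    using Suc by auto
  have lists: "rev [1..<Suc m] = m # rev [1..<m]" "[1..<Suc m] = [1..<m] @ [m]"
    using Suc.hyps by simp_all
  have maps: "map (swap_conj m (Suc m)) (map (\<lambda>j. emb2 j m (rmat \<kappa> (a j))) (rev [1..<m])) =
      map (\<lambda>j. emb2 j (Suc m) (rmat \<kappa> (a j))) (rev [1..<m])"
    "map (swap_conj m (Suc m)) (map (\<lambda>j. emb2 m j (rmat \<kappa> (b j))) [1..<m]) =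
      map (\<lambda>j. emb2 (Suc m) j (rmat \<kappa> (b j))) [1..<m]"
    by (simp_all add: swap_conj_emb2 map_eq_conv)
  have "prodops L (?LS (Suc m)) = mult L (emb2 m (Suc m) (rcheck \<kappa> (a m)))
      (mult L (prodops L (?LS m)) (emb2 m (Suc m) (rcheck \<kappa> (b m))))"
    unfolding lists by (simp add: prodops_snoc[OF fin, symmetric])
  also have "\<dots> = mult L (emb2 m (Suc m) (rcheck \<kappa> (a m)))
      (mult L (prodops L (?RS m m)) (emb2 m (Suc m) (rcheck \<kappa> (b m))))"
    using Suc.prems by (subst Suc.IH) auto
  also have "\<dots> = mult L (emb2 m (Suc m) (rmat \<kappa> (a m)))
      (mult L (prodops L (?RS m (Suc m))) (emb2 (Suc m) m (rmat \<kappa> (b m))))"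
    unfolding rcheck_sandwich[OF fin legs] swap_conj_prodops[OF fin legs(1,2)] map_append list.map
      maps swap_conj_emb1 transpose_apply_first ..
  also have "\<dots> = prodops L (?RS (Suc m) (Suc m))"
    unfolding lists by (simp add: prodops_snoc[OF fin, symmetric])
  finally show ?case .
qed simp

lemma prodops_rcheck_chain_right:
  assumes "m \<le> n" "finite L" "{m..n} \<subseteq> L"
  shows "prodops L (map (\<lambda>j. emb2 (j-1) j (rcheck \<kappa> (c j))) [m+1..<n+1] @ [emb1 n K] @
        map (\<lambda>j. emb2 (j-1) j (rcheck \<kappa> (d j))) (rev [m+1..<n+1])) =
    prodops L (map (\<lambda>j. emb2 m j (rmat \<kappa> (c j))) [m+1..<n+1] @ [emb1 m K] @
        map (\<lambda>j. emb2 j m (rmat \<kappa> (d j))) (rev [m+1..<n+1]))"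
  using assms(1,3)
proof (induction m rule: inc_induct)
  case (step m)
  let ?LS = "\<lambda>m. map (\<lambda>j. emb2 (j-1) j (rcheck \<kappa> (c j))) [m+1..<n+1] @ [emb1 n K] @
        map (\<lambda>j. emb2 (j-1) j (rcheck \<kappa> (d j))) (rev [m+1..<n+1])"
  let ?RS = "\<lambda>m k. map (\<lambda>j. emb2 k j (rmat \<kappa> (c j))) [m+1..<n+1] @ [emb1 k K] @
        map (\<lambda>j. emb2 j k (rmat \<kappa> (d j))) (rev [m+1..<n+1])"
  have fin: "finite L" and legs: "m \<in> L" "Suc m \<in> L" "m \<noteq> Suc m"
    using step assms(2) by auto
  have lists: "[m+1..<n+1] = Suc m # [Suc m+1..<n+1]" "rev [m+1..<n+1] = rev [Suc m+1..<n+1] @ [Suc m]"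
    using step.hyps by (simp_all add: upt_conv_Cons)
  have maps: "map (swap_conj m (Suc m)) (map (\<lambda>j. emb2 (Suc m) j (rmat \<kappa> (c j))) [Suc m+1..<n+1]) =
      map (\<lambda>j. emb2 m j (rmat \<kappa> (c j))) [Suc m+1..<n+1]"
    "map (swap_conj m (Suc m)) (map (\<lambda>j. emb2 j (Suc m) (rmat \<kappa> (d j))) (rev [Suc m+1..<n+1])) =
      map (\<lambda>j. emb2 j m (rmat \<kappa> (d j))) (rev [Suc m+1..<n+1])"
    by (auto simp: swap_conj_emb2 map_eq_conv)
  have "prodops L (?LS m) = mult L (emb2 m (Suc m) (rcheck \<kappa> (c (Suc m))))
      (mult L (prodops L (?LS (Suc m))) (emb2 m (Suc m) (rcheck \<kappa> (d (Suc m)))))"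
    unfolding lists by (simp add: prodops_snoc[OF fin, symmetric] del: upt_Suc)
  also have "\<dots> = mult L (emb2 m (Suc m) (rcheck \<kappa> (c (Suc m))))
      (mult L (prodops L (?RS (Suc m) (Suc m))) (emb2 m (Suc m) (rcheck \<kappa> (d (Suc m)))))"
    using step.prems by (subst step.IH) auto
  also have "\<dots> = mult L (emb2 m (Suc m) (rmat \<kappa> (c (Suc m))))
      (mult L (prodops L (?RS (Suc m) m)) (emb2 (Suc m) m (rmat \<kappa> (d (Suc m)))))"
    unfolding rcheck_sandwich[OF fin legs] swap_conj_prodops[OF fin legs(1,2)] map_append list.map
      maps swap_conj_emb1 transpose_apply_second ..
  also have "\<dots> = prodops L (?RS m m)"
    unfolding lists by (simp add: prodops_snoc[OF fin, symmetric] del: upt_Suc)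
  finally show ?case .
qed simp

lemma map_swap_conj_emb2:
  assumes "a \<notin> set js" "c \<notin> set js"
  shows "map (swap_conj a c \<circ> (\<lambda>j. emb2 a j (M j))) js = map (\<lambda>j. emb2 c j (M j)) js"
    "map (swap_conj a c \<circ> (\<lambda>j. emb2 j a (M j))) js = map (\<lambda>j. emb2 j c (M j)) js"
  using assms by (auto simp: map_eq_conv swap_conj_emb2 transpose_def)

text \<open>With \<open>a = 0\<close>, \<open>js = [1..n]\<close> and \<open>K = k\<close>, \<open>double_row\<close> is \<open>U\<^sub>0(x; t)\<close>.\<close>

context
  fixes \<kappa> :: complex and t :: "nat \<Rightarrow> complex"
begin

definition monodromy :: "nat set \<Rightarrow> nat \<Rightarrow> complex \<Rightarrow> nat list \<Rightarrow> op" where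
  "monodromy L a x js = prodops L (map (\<lambda>j. emb2 a j (rmat \<kappa> (x / t j))) js)"

definition monodromy_refl :: "nat set \<Rightarrow> nat \<Rightarrow> complex \<Rightarrow> nat list \<Rightarrow> op" where
  "monodromy_refl L a x js = prodops L (map (\<lambda>j. emb2 j a (rmat \<kappa> (x * t j))) (rev js))"

definition double_row :: "nat set \<Rightarrow> nat \<Rightarrow> (complex \<Rightarrow> bool \<Rightarrow> bool \<Rightarrow> complex) \<Rightarrow> complex \<Rightarrow>
    nat list \<Rightarrow> op" where
  "double_row L a K x js = prodops L (map (\<lambda>j. emb2 a j (rmat \<kappa> (x / t j))) js @ [emb1 a (K x)] @
     map (\<lambda>j. emb2 j a (rmat \<kappa> (x * t j))) (rev js))"

lemma double_row_eq:
  "finite L \<Longrightarrow> double_row L a K x js =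
    mult L (monodromy L a x js) (mult L (emb1 a (K x)) (monodromy_refl L a x js))"
  by (simp add: double_row_def monodromy_def monodromy_refl_def prodops_append)

lemma double_row_split:
  assumes "finite L"
  shows "double_row L a K x (js @ j # js') =
    mult L (monodromy L a x js) (mult L (emb2 a j (rmat \<kappa> (x / t j)))
      (mult L (double_row L a K x js') (mult L (emb2 j a (rmat \<kappa> (x * t j))) (monodromy_refl L a x js))))"
  using assms by (simp add: double_row_def monodromy_def monodromy_refl_def prodops_append mult_assoc)

lemma acts_on_monodromy: "finite L \<Longrightarrow> insert a (set js) \<subseteq> S \<Longrightarrow> acts_on L S (monodromy L a x js)"
  unfolding monodromy_def by (intro acts_on_prodops) (auto intro: acts_on_emb2)

lemma acts_on_monodromy_refl:
  "finite L \<Longrightarrow> insert a (set js) \<subseteq> S \<Longrightarrow> acts_on L S (monodromy_refl L a x js)"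
  unfolding monodromy_refl_def by (intro acts_on_prodops) (auto intro: acts_on_emb2)

lemma acts_on_double_row:
  "finite L \<Longrightarrow> insert a (set js) \<subseteq> S \<Longrightarrow> acts_on L S (double_row L a K x js)"
  unfolding double_row_def by (intro acts_on_prodops) (auto intro: acts_on_emb1 acts_on_emb2)

lemma swap_conj_monodromy:
  assumes "finite L" "a \<in> L" "c \<in> L" "a \<notin> set js" "c \<notin> set js"
  shows "swap_conj a c (monodromy L a x js) = monodromy L c x js"
  using assms by (simp add: monodromy_def swap_conj_prodops map_swap_conj_emb2)

lemma swap_conj_monodromy_refl:
  assumes "finite L" "a \<in> L" "c \<in> L" "a \<notin> set js" "c \<notin> set js"
  shows "swap_conj a c (monodromy_refl L a x js) = monodromy_refl L c x js"
  using assms by (simp add: monodromy_refl_def swap_conj_prodops map_swap_conj_emb2)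

lemma swap_conj_double_row:
  assumes "finite L" "a \<in> L" "c \<in> L" "a \<notin> set js" "c \<notin> set js"
  shows "swap_conj a c (double_row L a K x js) = double_row L c K x js"
  using assms by (simp add: double_row_def swap_conj_prodops swap_conj_emb1 map_swap_conj_emb2)

lemma restrict_monodromy_off0:
  "a \<noteq> 0 \<Longrightarrow> 0 \<notin> set js \<Longrightarrow> restrict_op {1..n} (monodromy {0..n} a x js) = monodromy {1..n} a x js"
  unfolding monodromy_def by (rule restrict_prodops_off0[of "insert a (set js)"]) (auto intro: acts_on_emb2)

lemma restrict_monodromy_refl_off0:
  "a \<noteq> 0 \<Longrightarrow> 0 \<notin> set js \<Longrightarrow>
    restrict_op {1..n} (monodromy_refl {0..n} a x js) = monodromy_refl {1..n} a x js"
  unfolding monodromy_refl_def by (rule restrict_prodops_off0[of "insert a (set js)"]) (auto intro: acts_on_emb2)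

lemma restrict_double_row_off0:
  "a \<noteq> 0 \<Longrightarrow> 0 \<notin> set js \<Longrightarrow>
    restrict_op {1..n} (double_row {0..n} a K x js) = double_row {1..n} a K x js"
  unfolding double_row_def
  by (rule restrict_prodops_off0[of "insert a (set js)"]) (auto intro: acts_on_emb1 acts_on_emb2)

lemma monodromy_mult_monodromy_refl_inverse:
  assumes "finite L" "a \<in> L" "set js \<subseteq> L" "a \<notin> set js" "x \<noteq> 0"
    and "\<forall>j\<in>set js. t j \<noteq> 0 \<and> 1 - \<kappa>^2 * (x / t j) \<noteq> 0 \<and> 1 - \<kappa>^2 * (1 / x * t j) \<noteq> 0"
  shows "mult L (monodromy L a x js) (monodromy_refl L a (1 / x) js) = idop L"
  unfolding monodromy_def monodromy_refl_def
  by (rule prodops_telescope) (use assms in \<open>auto intro!: rmat_unitarity_op\<close>)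

lemma monodromy_refl_mult_monodromy_inverse:
  assumes "finite L" "a \<in> L" "set js \<subseteq> L" "a \<notin> set js" "x \<noteq> 0"
    and "\<forall>j\<in>set js. t j \<noteq> 0 \<and> 1 - \<kappa>^2 * (x * t j) \<noteq> 0 \<and> 1 - \<kappa>^2 * (1 / x / t j) \<noteq> 0"
  shows "mult L (monodromy_refl L a x js) (monodromy L a (1 / x) js) = idop L"
proof -
  have "mult L (prodops L (map (\<lambda>j. emb2 j a (rmat \<kappa> (x * t j))) (rev js)))
      (prodops L (map (\<lambda>j. emb2 a j (rmat \<kappa> (1 / x / t j))) (rev (rev js)))) = idop L"
    by (rule prodops_telescope) (use assms in \<open>auto intro!: rmat_unitarity_op\<close>)
  then show ?thesis
    by (simp add: monodromy_def monodromy_refl_def)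
qed

lemma double_row_inverse:
  assumes fin: "finite L" and legs: "a \<in> L" "set js \<subseteq> L" "a \<notin> set js" and "x \<noteq> 0"
    and "\<forall>j\<in>set js. t j \<noteq> 0 \<and> 1 - \<kappa>^2 * (x / t j) \<noteq> 0 \<and> 1 - \<kappa>^2 * (1 / x * t j) \<noteq> 0 \<and>
      1 - \<kappa>^2 * (x * t j) \<noteq> 0 \<and> 1 - \<kappa>^2 * (1 / x / t j) \<noteq> 0"
    and K: "mult L (emb1 a (K x)) (emb1 a (K (1 / x))) = idop L"
  shows "mult L (double_row L a K x js) (double_row L a K (1 / x) js) = idop L"
proof -
  have "mult L (monodromy_refl L a x js) (monodromy L a (1 / x) js) = idop L"
    using assms by (intro monodromy_refl_mult_monodromy_inverse) auto
  moreover have "mult L (monodromy L a x js) (monodromy_refl L a (1 / x) js) = idop L"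
    using assms by (intro monodromy_mult_monodromy_refl_inverse) auto
  ultimately show ?thesis
    using K fin by (simp add: double_row_eq mult_assoc mult_cancel_inner)
qed

text \<open>The two rows trade places by the train argument, one Yang--Baxter move per leg
  \<open>j\<close> (using \<open>(x/t\<^sub>j)(x t\<^sub>j) = x\<^sup>2\<close>); the flip then relabels leg \<open>a\<close> as \<open>c\<close>.\<close>

lemma monodromy_exchange:
  assumes fin: "finite L" and legs: "a \<in> L" "c \<in> L" "a \<noteq> c" "set js \<subseteq> L" "distinct js"
      "a \<notin> set js" "c \<notin> set js"
    and t: "\<forall>j\<in>set js. t j \<noteq> 0" and B: "acts_on L {a} B"
  shows "mult L B (mult L (monodromy L a x js) (mult L (emb2 a c (rmat \<kappa> (x^2)))
      (mult L (monodromy_refl L c x js) (flip_op L a c)))) =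
    mult L (monodromy_refl L c x js) (mult L B (mult L (emb2 a c (rmat \<kappa> (x^2)))
      (mult L (flip_op L a c) (monodromy L c x js))))"
proof -
  let ?r = "emb2 a c (rmat \<kappa> (x^2))"
  have train: "mult L (monodromy L a x js) (mult L ?r (monodromy_refl L c x js)) =
      mult L (monodromy_refl L c x js) (mult L ?r (monodromy L a x js))"
    unfolding monodromy_def monodromy_refl_def
  proof (rule prodops_train_exchange[OF fin _ legs(5,6,7,3)])
    show "\<forall>j\<in>set js. mult L (emb2 a j (rmat \<kappa> (x / t j))) (mult L ?r (emb2 j c (rmat \<kappa> (x * t j)))) =
        mult L (emb2 j c (rmat \<kappa> (x * t j))) (mult L ?r (emb2 a j (rmat \<kappa> (x / t j))))"
    proof
      fix j assume j: "j \<in> set js"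
      then have "x / t j * (x * t j) = x^2"
        using t by (simp add: power2_eq_square)
      then show "mult L (emb2 a j (rmat \<kappa> (x / t j))) (mult L ?r (emb2 j c (rmat \<kappa> (x * t j)))) =
          mult L (emb2 j c (rmat \<kappa> (x * t j))) (mult L ?r (emb2 a j (rmat \<kappa> (x / t j))))"
        using rmat_ybe_op[OF fin legs(1) _ legs(2), of j \<kappa> "x / t j" "x * t j"] j legs by auto
    qed
  qed (auto intro: acts_on_emb2)
  have "mult L B (monodromy_refl L c x js) = mult L (monodromy_refl L c x js) B"
    by (rule mult_commute_disjoint_legs[OF fin B acts_on_monodromy_refl[OF fin subset_refl]])
      (use legs in auto)
  moreover have "mult L (monodromy L a x js) (flip_op L a c) = mult L (flip_op L a c) (monodromy L c x js)"
    using mult_flip_eq_flip_mult[OF fin legs(1,2)] swap_conj_monodromy[OF fin legs(1,2,6,7)] by simp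
  ultimately show ?thesis
    using train fin by (metis mult_assoc)
qed

end

section \<open>The transfer matrix at \<open>t\<^sub>i\<^sup>\<plusminus>\<^sup>1\<close>\<close>

lemma transfer_eq_ptrace0_double_row:
  "transfer n \<kappa> \<kappa>0 \<upsilon>0 \<psi>0 \<kappa>n \<upsilon>n \<psi>n t x = ptrace0 n (mult {0..n}
    (emb1 0 (dressed_kbar \<kappa> \<kappa>0 \<upsilon>0 \<psi>0 (\<kappa>^2 * x))) (double_row \<kappa> t {0..n} 0 (kmat \<kappa>n \<upsilon>n \<psi>n) x [1..<n+1]))"
proof -
  have fin: "finite {0..n}" and "0 \<in> {0..n}" by simp_all
  then have "prodops {0..n} [emb1 0 (theta \<kappa>), emb1 0 (kbar \<kappa>0 \<upsilon>0 \<psi>0 (\<kappa>^2 * x)), emb1 0 (theta \<kappa>)] =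
      restrict_op {0..n} (emb1 0 (dressed_kbar \<kappa> \<kappa>0 \<upsilon>0 \<psi>0 (\<kappa>^2 * x)))"
    by (simp add: mult_emb1_emb1 theta_matrix_product dressed_kbar_def[abs_def])
  then show ?thesis
    unfolding transfer_def prodops_append[OF fin] by (simp add: Ulist_def double_row_def)
qed

lemma ptrace0_boundary_flip:
  assumes "i \<in> {1..n}"
  shows "ptrace0 n (mult {0..n} (emb1 0 (dressed_kbar \<kappa> \<kappa>0 \<upsilon>0 \<psi>0 (\<kappa>^2 * x)))
      (mult {0..n} (emb2 0 i (rmat \<kappa> (x^2))) (flip_op {0..n} 0 i))) =
    restrict_op {1..n} (emb1 i (boundary_fusion \<kappa> \<kappa>0 \<upsilon>0 \<psi>0 x))"
proof -
  have fin: "finite {0..n}" and legs: "0 \<in> {0..n}" "i \<in> {0..n}" "0 \<noteq> i"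
    using assms by auto
  show ?thesis
    unfolding mult_assoc[OF fin, symmetric] mult_emb1_emb2[OF fin legs] mult_restrict_left
    using ptrace0_emb2_flip[OF assms] by (simp add: boundary_fusion_def[abs_def] sum_distrib_right)
qed

lemma transport_eq_rows:
  assumes "1 \<le> i" "i \<le> n"
  shows "transport n \<kappa> \<kappa>0 \<upsilon>0 \<psi>0 \<kappa>n \<upsilon>n \<psi>n 1 1 t i =
    mult {1..n} (monodromy_refl \<kappa> t {1..n} i (1 / t i) [1..<i])
      (mult {1..n} (emb1 i (kbar \<kappa>0 \<upsilon>0 \<psi>0 (1 / t i)))
      (mult {1..n} (monodromy \<kappa> t {1..n} i (1 / t i) [1..<i])
        (double_row \<kappa> t {1..n} i (kmat \<kappa>n \<upsilon>n \<psi>n) (1 / t i) [i+1..<n+1])))"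
proof -
  define y where "y = 1 / t i"
  have fin: "finite {1..n}" by simp
  have y: "t j / t i = y * t j" "1 / (t j * t i) = y / t j" "1 / (t i * t j) = y / t j"
    "1 * t j / t i = y * t j" for j
    by (simp_all add: y_def)
  let ?l = "map (\<lambda>j. emb2 j (j+1) (rcheck \<kappa> (t j / t i))) (rev [1..<i]) @
    [emb1 1 (kbar \<kappa>0 \<upsilon>0 \<psi>0 y)] @ map (\<lambda>j. emb2 j (j+1) (rcheck \<kappa> (1 / (t j * t i)))) [1..<i]"
  let ?r = "map (\<lambda>j. emb2 (j-1) j (rcheck \<kappa> (1 / (t i * t j)))) [i+1..<n+1] @
    [emb1 n (kmat \<kappa>n \<upsilon>n \<psi>n y)] @ map (\<lambda>j. emb2 (j-1) j (rcheck \<kappa> (1 * t j / t i))) (rev [i+1..<n+1])"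
  have "transport n \<kappa> \<kappa>0 \<upsilon>0 \<psi>0 \<kappa>n \<upsilon>n \<psi>n 1 1 t i = prodops {1..n} (?l @ ?r)"
    by (simp add: transport_def y_def)
  also have "\<dots> = mult {1..n} (prodops {1..n} ?l) (prodops {1..n} ?r)"
    by (rule prodops_append[OF fin])
  also have "prodops {1..n} ?l = mult {1..n} (monodromy_refl \<kappa> t {1..n} i y [1..<i])
      (mult {1..n} (emb1 i (kbar \<kappa>0 \<upsilon>0 \<psi>0 y)) (monodromy \<kappa> t {1..n} i y [1..<i]))"
    using assms by (subst prodops_rcheck_chain_left) (auto simp: y monodromy_def monodromy_refl_def prodops_append)
  also have "prodops {1..n} ?r = double_row \<kappa> t {1..n} i (kmat \<kappa>n \<upsilon>n \<psi>n) y [i+1..<n+1]"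
    using assms by (subst prodops_rcheck_chain_right) (auto simp: y double_row_def)
  finally show ?thesis
    by (simp only: mult_assoc[OF fin] y_def)
qed

context
  fixes n i :: nat and \<kappa> \<kappa>0 \<upsilon>0 \<psi>0 \<kappa>n \<upsilon>n \<psi>n :: complex and t :: "nat \<Rightarrow> complex"
  assumes i_range: "1 \<le> i" "i \<le> n" and t_nonzero: "\<forall>j\<in>{1..n}. t j \<noteq> 0" and kappa_sq: "\<kappa>^2 \<noteq> 1"
begin

abbreviation left_row :: "nat set \<Rightarrow> nat \<Rightarrow> complex \<Rightarrow> op" where
  "left_row L a x \<equiv> monodromy \<kappa> t L a x [1..<i]"

abbreviation left_row_refl :: "nat set \<Rightarrow> nat \<Rightarrow> complex \<Rightarrow> op" where
  "left_row_refl L a x \<equiv> monodromy_refl \<kappa> t L a x [1..<i]"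

abbreviation right_tail :: "nat set \<Rightarrow> nat \<Rightarrow> complex \<Rightarrow> op" where
  "right_tail L a x \<equiv> double_row \<kappa> t L a (kmat \<kappa>n \<upsilon>n \<psi>n) x [i+1..<n+1]"

abbreviation boundary_op :: "complex \<Rightarrow> op" where
  "boundary_op x \<equiv> emb1 0 (dressed_kbar \<kappa> \<kappa>0 \<upsilon>0 \<psi>0 (\<kappa>^2 * x))"

lemma legs_0_i:
  "finite {0..n}" "0 \<in> {0..n}" "i \<in> {0..n}" "0 \<noteq> i" "set [1..<i] \<subseteq> {0..n}" "distinct [1..<i]"
  "0 \<notin> set [1..<i]" "i \<notin> set [1..<i]" "0 \<notin> set [i+1..<n+1]" "i \<notin> set [i+1..<n+1]"
  using i_range by auto

lemma transfer_eq_ptrace0_split: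
  "transfer n \<kappa> \<kappa>0 \<upsilon>0 \<psi>0 \<kappa>n \<upsilon>n \<psi>n t x = ptrace0 n (mult {0..n} (boundary_op x)
    (mult {0..n} (left_row {0..n} 0 x) (mult {0..n} (emb2 0 i (rmat \<kappa> (x / t i)))
    (mult {0..n} (right_tail {0..n} 0 x) (mult {0..n} (emb2 i 0 (rmat \<kappa> (x * t i))) (left_row_refl {0..n} 0 x))))))"
proof -
  have "[1..<n+1] = [1..<i] @ i # [i+1..<n+1]"
    using i_range upt_add_eq_append[of 1 i "n+1-i"] by (simp add: upt_conv_Cons)
  then show ?thesis
    by (simp add: transfer_eq_ptrace0_double_row double_row_split del: upt_Suc)
qed

text \<open>At \<open>x = t\<^sub>i\<^sup>-\<^sup>1\<close> the factor \<open>r\<^sub>i\<^sub>0(x t\<^sub>i)\<close> is the flip; pushing it through the reflected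
  left row and the right tail relabels both from leg 0 to leg \<open>i\<close>.\<close>

lemma rearrange_at_inverse:
  assumes x: "x * t i = 1"
  shows "mult {0..n} (boundary_op x) (mult {0..n} (left_row {0..n} 0 x) (mult {0..n} (emb2 0 i (rmat \<kappa> (x / t i)))
      (mult {0..n} (right_tail {0..n} 0 x) (mult {0..n} (emb2 i 0 (rmat \<kappa> (x * t i))) (left_row_refl {0..n} 0 x))))) =
    mult {0..n} (left_row_refl {0..n} i x) (mult {0..n}
      (mult {0..n} (boundary_op x) (mult {0..n} (emb2 0 i (rmat \<kappa> (x^2))) (flip_op {0..n} 0 i)))
      (mult {0..n} (left_row {0..n} i x) (right_tail {0..n} i x)))"
proof -
  let ?m = "mult {0..n}" and ?P = "flip_op {0..n} 0 i"
  note legs = legs_0_i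
  have "t i \<noteq> 0"
    using x by auto
  then have "1 / t i = x"
    using x by (simp add: divide_eq_eq)
  then have "x / t i = x^2"
    by (metis power2_eq_square times_divide_eq_right mult.right_neutral)
  have "restrict_op {0..n} (emb2 i 0 (rmat \<kappa> (x * t i))) = ?P"
    using restrict_emb2_rmat_1[OF kappa_sq legs(3,2) legs(4)[symmetric]] x by (simp add: flip_op_commute)
  then have "?m (emb2 i 0 (rmat \<kappa> (x * t i))) (left_row_refl {0..n} 0 x) = ?m ?P (left_row_refl {0..n} 0 x)"
    by (metis mult_restrict_left)
  also have "\<dots> = ?m (left_row_refl {0..n} i x) ?P"
    using flip_mult_eq_mult_flip[OF legs(1-3)] swap_conj_monodromy_refl[OF legs(1-3,7,8)] by simp
  finally have "?m (right_tail {0..n} 0 x) (?m (emb2 i 0 (rmat \<kappa> (x * t i))) (left_row_refl {0..n} 0 x)) =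
      ?m (right_tail {0..n} 0 x) (?m (left_row_refl {0..n} i x) ?P)"
    by simp
  also have "\<dots> = ?m (left_row_refl {0..n} i x) (?m ?P (right_tail {0..n} i x))"
  proof -
    have "?m (right_tail {0..n} 0 x) (left_row_refl {0..n} i x) = ?m (left_row_refl {0..n} i x) (right_tail {0..n} 0 x)"
      by (rule mult_commute_disjoint_legs[OF legs(1) acts_on_double_row[OF legs(1) subset_refl]
          acts_on_monodromy_refl[OF legs(1) subset_refl]]) (use legs in auto)
    moreover have "?m (right_tail {0..n} 0 x) ?P = ?m ?P (right_tail {0..n} i x)"
      using mult_flip_eq_flip_mult[OF legs(1-3)] swap_conj_double_row[OF legs(1-3,9,10)] by simp
    ultimately show ?thesis
      using mult_eq_imp_mult_mult_eq[OF legs(1)] by metis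
  qed
  finally have tail: "?m (right_tail {0..n} 0 x) (?m (emb2 i 0 (rmat \<kappa> (x * t i))) (left_row_refl {0..n} 0 x)) =
      ?m (left_row_refl {0..n} i x) (?m ?P (right_tail {0..n} i x))" .
  have ex: "?m (boundary_op x) (?m (left_row {0..n} 0 x) (?m (emb2 0 i (rmat \<kappa> (x^2)))
      (?m (left_row_refl {0..n} i x) ?P))) =
    ?m (left_row_refl {0..n} i x) (?m (boundary_op x) (?m (emb2 0 i (rmat \<kappa> (x^2))) (?m ?P (left_row {0..n} i x))))"
    using t_nonzero i_range by (intro monodromy_exchange[OF legs(1-4)]) (auto intro: acts_on_emb1)
  show ?thesis
    using tail arg_cong[OF ex, of "\<lambda>Z. ?m Z (right_tail {0..n} i x)"] \<open>x / t i = x^2\<close>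
    by (simp only: mult_assoc[OF legs(1)])
qed

text \<open>At \<open>x = t\<^sub>i\<close> it is \<open>r\<^sub>0\<^sub>i(x/t\<^sub>i)\<close> that is the flip; pushing it to the end relabels
  everything behind it.\<close>

lemma rearrange_at_inhomogeneity:
  defines "x \<equiv> t i"
  shows "mult {0..n} (boundary_op x) (mult {0..n} (left_row {0..n} 0 x) (mult {0..n} (emb2 0 i (rmat \<kappa> (x / t i)))
      (mult {0..n} (right_tail {0..n} 0 x) (mult {0..n} (emb2 i 0 (rmat \<kappa> (x * t i))) (left_row_refl {0..n} 0 x))))) =
    mult {0..n} (right_tail {0..n} i x) (mult {0..n} (left_row_refl {0..n} i x) (mult {0..n}
      (mult {0..n} (boundary_op x) (mult {0..n} (emb2 0 i (rmat \<kappa> (x^2))) (flip_op {0..n} 0 i)))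
      (left_row {0..n} i x)))"
proof -
  let ?m = "mult {0..n}" and ?P = "flip_op {0..n} 0 i" and ?r = "emb2 0 i (rmat \<kappa> (x^2))"
  note legs = legs_0_i
  have "x / t i = 1" "x * t i = x^2"
    using t_nonzero i_range by (auto simp: x_def power2_eq_square)
  then have "?m (emb2 0 i (rmat \<kappa> (x / t i))) (?m (right_tail {0..n} 0 x)
      (?m (emb2 i 0 (rmat \<kappa> (x * t i))) (left_row_refl {0..n} 0 x))) =
    ?m ?P (?m (right_tail {0..n} 0 x) (?m (emb2 i 0 (rmat \<kappa> (x^2))) (left_row_refl {0..n} 0 x)))"
    by (metis restrict_emb2_rmat_1[OF kappa_sq legs(2-4)] mult_restrict_left)
  also have "\<dots> = ?m (?m (right_tail {0..n} i x) (?m ?r (left_row_refl {0..n} i x))) ?P"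
    using legs by (simp add: flip_mult_eq_mult_flip[OF legs(1-3)] swap_conj_mult[OF legs(1-3)]
        swap_conj_double_row[OF legs(1-3)] swap_conj_monodromy_refl[OF legs(1-3)] swap_conj_emb2)
  finally have "?m (boundary_op x) (?m (left_row {0..n} 0 x) (?m (emb2 0 i (rmat \<kappa> (x / t i)))
      (?m (right_tail {0..n} 0 x) (?m (emb2 i 0 (rmat \<kappa> (x * t i))) (left_row_refl {0..n} 0 x))))) =
    ?m (boundary_op x) (?m (left_row {0..n} 0 x) (?m (right_tail {0..n} i x)
      (?m ?r (?m (left_row_refl {0..n} i x) ?P))))"
    by (simp add: mult_assoc[OF legs(1)])
  also have "\<dots> = ?m (right_tail {0..n} i x) (?m (boundary_op x) (?m (left_row {0..n} 0 x)
      (?m ?r (?m (left_row_refl {0..n} i x) ?P))))"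
  proof -
    have "?m (left_row {0..n} 0 x) (right_tail {0..n} i x) = ?m (right_tail {0..n} i x) (left_row {0..n} 0 x)"
      by (rule mult_commute_disjoint_legs[OF legs(1) acts_on_monodromy[OF legs(1) subset_refl]
          acts_on_double_row[OF legs(1) subset_refl]]) (use legs in auto)
    moreover have "?m (boundary_op x) (right_tail {0..n} i x) = ?m (right_tail {0..n} i x) (boundary_op x)"
      by (rule mult_commute_disjoint_legs[OF legs(1) acts_on_emb1[of 0 "{0}"]
          acts_on_double_row[OF legs(1) subset_refl]]) (use legs in auto)
    ultimately show ?thesis
      using mult_eq_imp_mult_mult_eq[OF legs(1)] by metis
  qed
  also have "\<dots> = ?m (right_tail {0..n} i x) (?m (left_row_refl {0..n} i x)
      (?m (?m (boundary_op x) (?m ?r ?P)) (left_row {0..n} i x)))"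
    using t_nonzero i_range
    by (subst monodromy_exchange[OF legs(1-4)]) (auto intro: acts_on_emb1 simp: mult_assoc[OF legs(1)])
  finally show ?thesis .
qed

lemma transfer_factor_at_inverse:
  assumes "x * t i = 1"
  shows "transfer n \<kappa> \<kappa>0 \<upsilon>0 \<psi>0 \<kappa>n \<upsilon>n \<psi>n t x =
    mult {1..n} (left_row_refl {1..n} i x) (mult {1..n} (restrict_op {1..n} (emb1 i (boundary_fusion \<kappa> \<kappa>0 \<upsilon>0 \<psi>0 x)))
      (mult {1..n} (left_row {1..n} i x) (right_tail {1..n} i x)))"
proof -
  note legs = legs_0_i
  have "restrict_op {1..n} (mult {0..n} (left_row {0..n} i x) (right_tail {0..n} i x)) =
      mult {1..n} (left_row {0..n} i x) (right_tail {0..n} i x)"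
    by (rule restrict_mult_off0[OF acts_on_monodromy[OF legs(1) subset_refl]]) (use legs in auto)
  also have "\<dots> = mult {1..n} (left_row {1..n} i x) (right_tail {1..n} i x)"
    using legs by (metis mult_restrict_left mult_restrict_right restrict_monodromy_off0
        restrict_double_row_off0)
  finally have right: "restrict_op {1..n} (mult {0..n} (left_row {0..n} i x) (right_tail {0..n} i x)) = \<dots>" .
  have left: "restrict_op {1..n} (left_row_refl {0..n} i x) = left_row_refl {1..n} i x"
    using legs by (intro restrict_monodromy_refl_off0) auto
  have "acts_on {0..n} (insert i (set [1..<i])) (left_row_refl {0..n} i x)"
    "acts_on {0..n} {1..n} (mult {0..n} (left_row {0..n} i x) (right_tail {0..n} i x))"
    using i_range by (auto intro!: acts_on_monodromy_refl acts_on_mult acts_on_monodromy acts_on_double_row)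
  from ptrace0_mult_left_restrict[OF this(1) _ left] ptrace0_mult_right_restrict[OF this(2) _ right]
  show ?thesis
    unfolding transfer_eq_ptrace0_split rearrange_at_inverse[OF assms]
    using ptrace0_boundary_flip[of i n] i_range by simp
qed

lemma transfer_factor_at_inhomogeneity:
  "transfer n \<kappa> \<kappa>0 \<upsilon>0 \<psi>0 \<kappa>n \<upsilon>n \<psi>n t (t i) =
    mult {1..n} (right_tail {1..n} i (t i)) (mult {1..n} (left_row_refl {1..n} i (t i))
      (mult {1..n} (restrict_op {1..n} (emb1 i (boundary_fusion \<kappa> \<kappa>0 \<upsilon>0 \<psi>0 (t i)))) (left_row {1..n} i (t i))))"
proof -
  note legs = legs_0_i
  have "ptrace0 n (mult {0..n} (right_tail {0..n} i x) X) = mult {1..n} (right_tail {1..n} i x) (ptrace0 n X)"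
    for x X
    by (intro ptrace0_mult_left_restrict[OF acts_on_double_row[OF legs(1) subset_refl]]
        restrict_double_row_off0) (use legs in \<open>simp_all del: upt_Suc\<close>)
  moreover have "ptrace0 n (mult {0..n} (left_row_refl {0..n} i x) X) =
      mult {1..n} (left_row_refl {1..n} i x) (ptrace0 n X)" for x X
    by (intro ptrace0_mult_left_restrict[OF acts_on_monodromy_refl[OF legs(1) subset_refl]]
        restrict_monodromy_refl_off0) (use legs in \<open>simp_all del: upt_Suc\<close>)
  moreover have "ptrace0 n (mult {0..n} X (left_row {0..n} i x)) =
      mult {1..n} (ptrace0 n X) (left_row {1..n} i x)" for x X
    by (intro ptrace0_mult_right_restrict[OF acts_on_monodromy[OF legs(1) subset_refl]]
        restrict_monodromy_off0) (use legs in \<open>simp_all del: upt_Suc\<close>)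
  ultimately show ?thesis
    unfolding transfer_eq_ptrace0_split rearrange_at_inhomogeneity
    using ptrace0_boundary_flip[of i n] i_range by simp
qed

end

context
  fixes n i :: nat and \<kappa> \<kappa>0 \<kappa>n \<upsilon>0 \<upsilon>n \<psi>0 \<psi>n :: complex and t :: "nat \<Rightarrow> complex"
  assumes nonzero: "\<kappa> \<noteq> 0" "\<kappa>0 \<noteq> 0" "\<kappa>n \<noteq> 0" "\<upsilon>0 \<noteq> 0" "\<upsilon>n \<noteq> 0" "\<psi>0 \<noteq> 0" "\<psi>n \<noteq> 0"
    and t_nonzero: "\<forall>j\<in>{1..n}. t j \<noteq> 0"
    and nondeg: "nondegenerate n \<kappa> \<kappa>0 \<upsilon>0 \<kappa>n \<upsilon>n t"
    and i_range: "1 \<le> i" "i \<le> n"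
begin

lemma nondegenerate_at:
  assumes "e \<in> {t i, 1 / t i}"
  shows "\<forall>j\<in>{1..n}. 1 - \<kappa>^2 * e * t j \<noteq> 0 \<and> 1 - \<kappa>^2 * e / t j \<noteq> 0"
    "\<forall>y\<in>{\<kappa>^2 * e, 1 / t i}. (1 - \<kappa>0 * \<upsilon>0 * y) * (1 + \<kappa>0 * y / \<upsilon>0) \<noteq> 0"
    "(1 - \<kappa>n * \<upsilon>n * e) * (1 + \<kappa>n * e / \<upsilon>n) \<noteq> 0"
    "(1 - \<kappa>^2 * \<kappa>0 * \<upsilon>0 * e) * (1 + \<kappa>^2 * \<kappa>0 * e / \<upsilon>0) * (1 - \<kappa>^2 * e^2) \<noteq> 0"
  using nondeg assms atLeastAtMost_iff[THEN iffD2, OF conjI[OF i_range]]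
  unfolding nondegenerate_def by blast+

lemma kappa_sq_ne_1: "\<kappa>^2 \<noteq> 1"
proof -
  have "1 - \<kappa>^2 * (1 / t i) * t i \<noteq> 0" and "t i \<noteq> 0"
    using nondegenerate_at(1)[of "1 / t i"] t_nonzero i_range by auto
  then show ?thesis
    by auto
qed

lemma transfer_at_inverse_inhomogeneity:
  "transfer n \<kappa> \<kappa>0 \<upsilon>0 \<psi>0 \<kappa>n \<upsilon>n \<psi>n t (1 / t i) =
    smult_op (Phi_bdy \<kappa> \<kappa>0 \<upsilon>0 (1 / t i)) (transport n \<kappa> \<kappa>0 \<upsilon>0 \<psi>0 \<kappa>n \<upsilon>n \<psi>n 1 1 t i)"
proof -
  define x where "x = 1 / t i"
  have "t i \<noteq> 0"
    using t_nonzero i_range by auto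
  have "(1 - \<kappa>0 * \<upsilon>0 * (\<kappa>^2 * x)) * (1 + \<kappa>0 * (\<kappa>^2 * x) / \<upsilon>0) \<noteq> 0"
    "(1 - \<kappa>0 * \<upsilon>0 * x) * (1 + \<kappa>0 * x / \<upsilon>0) \<noteq> 0"
    "(1 - \<kappa>^2 * \<kappa>0 * \<upsilon>0 * x) * (1 + \<kappa>^2 * \<kappa>0 * x / \<upsilon>0) * (1 - \<kappa>^2 * x^2) \<noteq> 0"
    using nondegenerate_at(2,4)[of x] by (auto simp: x_def)
  then have "boundary_fusion \<kappa> \<kappa>0 \<upsilon>0 \<psi>0 x = (\<lambda>c d. Phi_bdy \<kappa> \<kappa>0 \<upsilon>0 x * kbar \<kappa>0 \<upsilon>0 \<psi>0 x c d)"
    using nonzero by (intro ext boundary_fusion_eq) auto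
  then show ?thesis
    using transfer_factor_at_inverse[OF i_range t_nonzero kappa_sq_ne_1, of x] transport_eq_rows[OF i_range]
      \<open>t i \<noteq> 0\<close>
    by (simp add: x_def emb1_smult restrict_smult smult_mult_left smult_mult_right)
qed

lemma rows_inverse_at_inhomogeneity:
  defines "x \<equiv> t i"
  shows "mult {1..n} (monodromy \<kappa> t {1..n} i x [1..<i]) (monodromy_refl \<kappa> t {1..n} i (1 / x) [1..<i]) =
      idop {1..n}"
    "mult {1..n} (monodromy_refl \<kappa> t {1..n} i x [1..<i]) (monodromy \<kappa> t {1..n} i (1 / x) [1..<i]) =
      idop {1..n}"
    "mult {1..n} (double_row \<kappa> t {1..n} i (kmat \<kappa>n \<upsilon>n \<psi>n) x [i+1..<n+1])
      (double_row \<kappa> t {1..n} i (kmat \<kappa>n \<upsilon>n \<psi>n) (1 / x) [i+1..<n+1]) = idop {1..n}"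
proof -
  have fin: "finite {1..n}" and iL: "i \<in> {1..n}" and x0: "x \<noteq> 0"
    and js: "set [1..<i] \<subseteq> {1..n}" "i \<notin> set [1..<i]" "set [i+1..<n+1] \<subseteq> {1..n}" "i \<notin> set [i+1..<n+1]"
    using t_nonzero i_range by (auto simp: x_def)
  have rows: "t j \<noteq> 0 \<and> 1 - \<kappa>^2 * (x / t j) \<noteq> 0 \<and> 1 - \<kappa>^2 * (1 / x * t j) \<noteq> 0 \<and>
      1 - \<kappa>^2 * (x * t j) \<noteq> 0 \<and> 1 - \<kappa>^2 * (1 / x / t j) \<noteq> 0" if "j \<in> {1..n}" for j
    using that t_nonzero nondegenerate_at(1)[of x] nondegenerate_at(1)[of "1 / x"]
    by (simp add: x_def mult.assoc times_divide_eq_right)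
  show "mult {1..n} (monodromy \<kappa> t {1..n} i x [1..<i]) (monodromy_refl \<kappa> t {1..n} i (1 / x) [1..<i]) =
      idop {1..n}"
    using rows js(1) by (intro monodromy_mult_monodromy_refl_inverse[OF fin iL js(1,2) x0]) blast
  show "mult {1..n} (monodromy_refl \<kappa> t {1..n} i x [1..<i]) (monodromy \<kappa> t {1..n} i (1 / x) [1..<i]) =
      idop {1..n}"
    using rows js(1) by (intro monodromy_refl_mult_monodromy_inverse[OF fin iL js(1,2) x0]) blast
  have "mult {1..n} (emb1 i (kmat \<kappa>n \<upsilon>n \<psi>n x)) (emb1 i (kmat \<kappa>n \<upsilon>n \<psi>n (1 / x))) = idop {1..n}"
    using nondegenerate_at(3)[of x] nondegenerate_at(3)[of "1 / x"] nonzero x0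
    by (intro kmat_unitarity_op[OF fin iL]) (auto simp: x_def)
  then show "mult {1..n} (double_row \<kappa> t {1..n} i (kmat \<kappa>n \<upsilon>n \<psi>n) x [i+1..<n+1])
      (double_row \<kappa> t {1..n} i (kmat \<kappa>n \<upsilon>n \<psi>n) (1 / x) [i+1..<n+1]) = idop {1..n}"
    using rows js(3) by (intro double_row_inverse[OF fin iL js(3,4) x0]) blast+
qed

lemma boundary_fusion_mult_kbar_inverse_op:
  defines "x \<equiv> t i"
  shows "mult {1..n} (restrict_op {1..n} (emb1 i (boundary_fusion \<kappa> \<kappa>0 \<upsilon>0 \<psi>0 x)))
      (mult {1..n} (emb1 i (kbar \<kappa>0 \<upsilon>0 \<psi>0 (1 / x))) Z) = smult_op (Phi_bdy \<kappa> \<kappa>0 \<upsilon>0 x) (restrict_op {1..n} Z)"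
proof -
  have fin: "finite {1..n}" and iL: "i \<in> {1..n}" and "x \<noteq> 0"
    using t_nonzero i_range by (auto simp: x_def)
  then have "(\<lambda>c d. \<Sum>r\<in>UNIV. boundary_fusion \<kappa> \<kappa>0 \<upsilon>0 \<psi>0 x c r * kbar \<kappa>0 \<upsilon>0 \<psi>0 (1 / x) r d) =
      (\<lambda>c d. Phi_bdy \<kappa> \<kappa>0 \<upsilon>0 x * (if c = d then 1 else 0))"
    using nondegenerate_at(2,4)[of x] nonzero by (intro ext boundary_fusion_mult_kbar_inverse) (auto simp: x_def)
  then have "mult {1..n} (restrict_op {1..n} (emb1 i (boundary_fusion \<kappa> \<kappa>0 \<upsilon>0 \<psi>0 x)))
      (emb1 i (kbar \<kappa>0 \<upsilon>0 \<psi>0 (1 / x))) = smult_op (Phi_bdy \<kappa> \<kappa>0 \<upsilon>0 x) (idop {1..n})"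
    using fin iL by (simp add: mult_emb1_emb1 emb1_smult restrict_smult restrict_emb1_id)
  moreover have "mult {1..n} (restrict_op {1..n} (emb1 i (boundary_fusion \<kappa> \<kappa>0 \<upsilon>0 \<psi>0 x)))
      (mult {1..n} (emb1 i (kbar \<kappa>0 \<upsilon>0 \<psi>0 (1 / x))) Z) = mult {1..n} (mult {1..n}
        (restrict_op {1..n} (emb1 i (boundary_fusion \<kappa> \<kappa>0 \<upsilon>0 \<psi>0 x))) (emb1 i (kbar \<kappa>0 \<upsilon>0 \<psi>0 (1 / x)))) Z"
    by (simp only: mult_assoc[OF fin])
  ultimately show ?thesis
    by (simp only: smult_mult_left mult_idop_left[OF fin])
qed

lemma transfer_mult_transport:
  "mult {1..n} (transfer n \<kappa> \<kappa>0 \<upsilon>0 \<psi>0 \<kappa>n \<upsilon>n \<psi>n t (t i)) (transport n \<kappa> \<kappa>0 \<upsilon>0 \<psi>0 \<kappa>n \<upsilon>n \<psi>n 1 1 t i) =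
    smult_op (Phi_bdy \<kappa> \<kappa>0 \<upsilon>0 (t i)) (idop {1..n})"
  unfolding transfer_factor_at_inhomogeneity[OF i_range t_nonzero kappa_sq_ne_1] transport_eq_rows[OF i_range]
  using rows_inverse_at_inhomogeneity boundary_fusion_mult_kbar_inverse_op
  by (simp add: mult_assoc mult_cancel_inner smult_mult_right del: upt_Suc)

end

theorem mainTheorem12:
  fixes n i :: nat and \<kappa> \<kappa>0 \<kappa>n \<upsilon>0 \<upsilon>n \<psi>0 \<psi>n :: complex and t :: "nat \<Rightarrow> complex"
  assumes "\<kappa> \<noteq> 0" "\<kappa>0 \<noteq> 0" "\<kappa>n \<noteq> 0" "\<upsilon>0 \<noteq> 0" "\<upsilon>n \<noteq> 0" "\<psi>0 \<noteq> 0" "\<psi>n \<noteq> 0"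
    and "\<forall>j\<in>{1..n}. t j \<noteq> 0"
    and "nondegenerate n \<kappa> \<kappa>0 \<upsilon>0 \<kappa>n \<upsilon>n t"
    and "1 \<le> i" "i \<le> n"
  shows "transfer n \<kappa> \<kappa>0 \<upsilon>0 \<psi>0 \<kappa>n \<upsilon>n \<psi>n t (1 / t i) =
           smult_op (Phi_bdy \<kappa> \<kappa>0 \<upsilon>0 (1 / t i))
             (transport n \<kappa> \<kappa>0 \<upsilon>0 \<psi>0 \<kappa>n \<upsilon>n \<psi>n 1 1 t i)
       \<and> (op_invertible {1..n} (transport n \<kappa> \<kappa>0 \<upsilon>0 \<psi>0 \<kappa>n \<upsilon>n \<psi>n 1 1 t i) \<longrightarrow>
          transfer n \<kappa> \<kappa>0 \<upsilon>0 \<psi>0 \<kappa>n \<upsilon>n \<psi>n t (t i) =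
           smult_op (Phi_bdy \<kappa> \<kappa>0 \<upsilon>0 (t i))
             (opinv {1..n} (transport n \<kappa> \<kappa>0 \<upsilon>0 \<psi>0 \<kappa>n \<upsilon>n \<psi>n 1 1 t i)))"
proof (intro conjI impI)
  show "transfer n \<kappa> \<kappa>0 \<upsilon>0 \<psi>0 \<kappa>n \<upsilon>n \<psi>n t (1 / t i) =
      smult_op (Phi_bdy \<kappa> \<kappa>0 \<upsilon>0 (1 / t i)) (transport n \<kappa> \<kappa>0 \<upsilon>0 \<psi>0 \<kappa>n \<upsilon>n \<psi>n 1 1 t i)"
    by (rule transfer_at_inverse_inhomogeneity[OF assms])
next
  assume "op_invertible {1..n} (transport n \<kappa> \<kappa>0 \<upsilon>0 \<psi>0 \<kappa>n \<upsilon>n \<psi>n 1 1 t i)"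
  moreover have "restrict_op {1..n} (transfer n \<kappa> \<kappa>0 \<upsilon>0 \<psi>0 \<kappa>n \<upsilon>n \<psi>n t (t i)) =
      transfer n \<kappa> \<kappa>0 \<upsilon>0 \<psi>0 \<kappa>n \<upsilon>n \<psi>n t (t i)"
    unfolding transfer_def by (rule restrict_ptrace0)
  ultimately show "transfer n \<kappa> \<kappa>0 \<upsilon>0 \<psi>0 \<kappa>n \<upsilon>n \<psi>n t (t i) =
      smult_op (Phi_bdy \<kappa> \<kappa>0 \<upsilon>0 (t i)) (opinv {1..n} (transport n \<kappa> \<kappa>0 \<upsilon>0 \<psi>0 \<kappa>n \<upsilon>n \<psi>n 1 1 t i))"
    by (intro eq_smult_opinv_if_mult_eq_smult_idop transfer_mult_transport[OF assms]) simp_all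
qed

end
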